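(* In the setting described in the context, suppose $p_i,p_j,p_k,p_l,p_u,p_w\in S_1$ satisfy $d(p_i,p_k)\ne d(p_j,p_l)$, $d(p_i,p_u)\ne d(p_j,p_w)$ and $d(p_k,p_u)\ne d(p_l,p_w)$. If $C_2$ is a conic, then $|C_{ij}\cap C_{kl}\cap C_{uw}|\le4$.
   Context: A plane algebraic curve is an infinite set $Z_{\mathbb{R}}(f)=\{(a,b)\in\mathbb{R}^2:f(a,b)=0\}$ for a nonzero $f\in\mathbb{R}[x,y]$; its degree is the minimal degree of such $f$; it is irreducible if $f$ can be chosen irreducible over $\mathbb{R}$. A conic is a curve of degree 2 that is not a union of two lines. Setting: $d\ge1$; $C_1=Z_{\mathbb{R}}(f_1)$ and $C_2=Z_{\mathbb{R}}(f_2)$ are irreducible plane algebraic curves of degree at most $d$ (possibly equal), with $f_1,f_2$ of minimum degree. $S_1=\{p_1,\dots,p_m\}\subset C_1$ and $S_2=\{q_1,\dots,q_n\}\subset C_2$ are sets of distinct points, $p_i=(a_i,b_i)$, satisfying: (1) neither $C_1$ nor $C_2$ is a vertical line; (2) $S_1\cap S_2=\emptyset$; (3) if $C_1$ (resp. $C_2$) is a circle, its center is not in $S_2$ (resp. $S_1$); (4) if $C_1$ (resp. $C_2$) is a circle, every concentric circle contains at most one point of $S_2$ (resp. $S_1$); (5) if $C_1$ (resp. $C_2$) is a line, then for every line $\ell$ parallel to it, the union of $\ell$ and its reflection in $C_1$ (resp. $C_2$) contains at most one point of $S_2$ (resp. $S_1$); (6) if $C_1$ (resp. $C_2$) is a line,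 every orthogonal line contains at most one point of $S_2$ (resp. $S_1$). For $1\le i,j\le m$, $C_{ij}\subset\mathbb{R}^4$ is the set of $(x,y,x',y')$ with $f_2(x,y)=0$, $f_2(x',y')=0$ and $(x-a_i)^2+(y-b_i)^2=(x'-a_j)^2+(y'-b_j)^2$. $d(\cdot,\cdot)$ is Euclidean distance. *)

theory Defs
  imports "HOL-Analysis.Analysis" "HOL-Computational_Algebra.Computational_Algebra"
begin

type_synonym pt = "real \<times> real"

text \<open>Bivariate real polynomials are represented as elements of R[x][y], i.e. the type
  real poly poly: the outer variable is y, the coefficients are polynomials in x.\<close>

definition eval2 :: "real poly poly \<Rightarrow> real \<Rightarrow> real \<Rightarrow> real" where
  "eval2 f a b = poly (map_poly (\<lambda>c. poly c a) f) b"

definition tdeg :: "real poly poly \<Rightarrow> nat" where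
  "tdeg f = Max ({degree (coeff f j) + j | j. coeff f j \<noteq> 0} \<union> {0})"

definition zset :: "real poly poly \<Rightarrow> pt set" where
  "zset f = {(a, b). eval2 f a b = 0}"

definition plane_curve :: "pt set \<Rightarrow> bool" where
  "plane_curve C \<longleftrightarrow> infinite C \<and> (\<exists>f. f \<noteq> 0 \<and> C = zset f)"

definition curve_degree :: "pt set \<Rightarrow> nat" where
  "curve_degree C = (LEAST n. \<exists>f. f \<noteq> 0 \<and> zset f = C \<and> tdeg f = n)"

definition irreducible_curve :: "pt set \<Rightarrow> bool" where
  "irreducible_curve C \<longleftrightarrow> plane_curve C \<and> (\<exists>f. irreducible f \<and> zset f = C)"

definition is_line :: "pt set \<Rightarrow> bool" where
  "is_line C \<longleftrightarrow> plane_curve C \<and> curve_degree C = 1"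

definition is_conic :: "pt set \<Rightarrow> bool" where
  "is_conic C \<longleftrightarrow> plane_curve C \<and> curve_degree C = 2 \<and>
     \<not> (\<exists>L1 L2. is_line L1 \<and> is_line L2 \<and> C = L1 \<union> L2)"

definition lin :: "real \<Rightarrow> real \<Rightarrow> real \<Rightarrow> pt set" where
  "lin a b c = {(x, y). a * x + b * y = c}"

definition vertical_line :: "pt set \<Rightarrow> bool" where
  "vertical_line C \<longleftrightarrow> (\<exists>c. C = {(x, y). x = c})"

definition is_circle :: "pt set \<Rightarrow> pt \<Rightarrow> real \<Rightarrow> bool" where
  "is_circle C c r \<longleftrightarrow> r > 0 \<and> C = {p. dist p c = r}"

definition is_circ :: "pt set \<Rightarrow> bool" where
  "is_circ C \<longleftrightarrow> (\<exists>c r. is_circle C c r)"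

definition reflect :: "real \<Rightarrow> real \<Rightarrow> real \<Rightarrow> pt \<Rightarrow> pt" where
  "reflect a b c p = (let t = 2 * (a * fst p + b * snd p - c) / (a\<^sup>2 + b\<^sup>2)
                      in (fst p - t * a, snd p - t * b))"

text \<open>Conditions (3)-(6) on the pair (curve C, point set S of the other curve).\<close>
definition circle_cond :: "pt set \<Rightarrow> pt set \<Rightarrow> bool" where
  "circle_cond C S \<longleftrightarrow> (\<forall>c r. is_circle C c r \<longrightarrow>
      c \<notin> S \<and>
      (\<forall>r'>0. \<forall>p\<in>S. \<forall>q\<in>S. dist p c = r' \<and> dist q c = r' \<longrightarrow> p = q))"

text \<open>A line parallel to C = lin a b c is lin a b c' with c' different from c.\<close>
definition line_cond :: "pt set \<Rightarrow> pt set \<Rightarrow> bool" where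
  "line_cond C S \<longleftrightarrow> (\<forall>a b c. (a, b) \<noteq> (0, 0) \<and> C = lin a b c \<longrightarrow>
      (\<forall>c'. c' \<noteq> c \<longrightarrow>
         (\<forall>p\<in>S. \<forall>q\<in>S. p \<in> lin a b c' \<union> reflect a b c ` lin a b c' \<and>
                         q \<in> lin a b c' \<union> reflect a b c ` lin a b c' \<longrightarrow> p = q)) \<and>
      (\<forall>c'. \<forall>p\<in>S. \<forall>q\<in>S. p \<in> lin (- b) a c' \<and> q \<in> lin (- b) a c' \<longrightarrow> p = q))"

definition Cset :: "real poly poly \<Rightarrow> (nat \<Rightarrow> pt) \<Rightarrow> nat \<Rightarrow> nat \<Rightarrow> (real \<times> real \<times> real \<times> real) set" where
  "Cset f2 p i j = {(x, y, x', y'). eval2 f2 x y = 0 \<and> eval2 f2 x' y' = 0 \<and>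
      (x - fst (p i))\<^sup>2 + (y - snd (p i))\<^sup>2 = (x' - fst (p j))\<^sup>2 + (y' - snd (p j))\<^sup>2}"

end

theory Submission
  imports Defs
begin

text \<open>Subtracting the equations \<open>|v - P\<^sub>a|\<^sup>2 = |v' - Q\<^sub>a|\<^sup>2\<close> (\<open>a = 1, 2, 3\<close>) pairwise leaves two
  linear equations in \<open>(v, v')\<close>. If \<open>Q\<^sub>1, Q\<^sub>2, Q\<^sub>3\<close> are not collinear they make \<open>v'\<close> an affine image
  \<open>T v\<close>, and \<open>v\<close> lies on the conic \<open>C\<^sub>2 = {F = 0}\<close> and on the conics \<open>F \<circ> T = 0\<close> and
  \<open>|v - P\<^sub>1|\<^sup>2 = |T v - Q\<^sub>1|\<^sup>2\<close>. Five points determine a conic, so there are at most four such \<open>v\<close>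
  unless both equations are multiples of \<open>F\<close>. That is impossible: invariance of \<open>F\<close> under \<open>T\<close>
  forces the linear part of \<open>T\<close> to vanish, making \<open>C\<^sub>2\<close> a circle about \<open>P\<^sub>1\<close>, or to be orthogonal,
  making the equation of \<open>C\<^sub>2\<close> degenerate. If the \<open>Q\<^sub>a\<close> are collinear, the linear equations either
  confine \<open>v\<close> and \<open>v'\<close> to lines, each meeting \<open>C\<^sub>2\<close> in at most two points, or fix \<open>v\<close> and put \<open>v'\<close>
  on a circle about \<open>Q\<^sub>1\<close>, which meets \<open>C\<^sub>2\<close> in at most four points; configurations in which the
  equations are dependent are excluded by the distance hypotheses through Stewart's theorem.\<close>

section \<open>Quadratic functions of two variables\<close>

definition qform :: "real \<Rightarrow> real \<Rightarrow> real \<Rightarrow> real \<Rightarrow> real \<Rightarrow> real" where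
  "qform a b c x y = a * x\<^sup>2 + b * x * y + c * y\<^sup>2"

definition quad :: "real \<Rightarrow> real \<Rightarrow> real \<Rightarrow> real \<Rightarrow> real \<Rightarrow> real \<Rightarrow> real \<Rightarrow> real \<Rightarrow> real" where
  "quad a b c d e g x y = qform a b c x y + d * x + e * y + g"

definition quadratic :: "(real \<Rightarrow> real \<Rightarrow> real) \<Rightarrow> bool" where
  "quadratic G \<longleftrightarrow> (\<exists>a b c d e g. \<forall>x y. G x y = quad a b c d e g x y)"

text \<open>Half the determinant of the symmetric matrix [[2a, b, d], [b, 2c, e], [d, e, 2g]]
  of the quadratic; it vanishes exactly for degenerate conics.\<close>
definition quad_det :: "real \<Rightarrow> real \<Rightarrow> real \<Rightarrow> real \<Rightarrow> real \<Rightarrow> real \<Rightarrow> real" where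
  "quad_det a b c d e g = 4 * a * c * g + b * e * d - a * e\<^sup>2 - c * d\<^sup>2 - g * b\<^sup>2"

lemma quad_eq_0_iff_coeffs:
  "(\<forall>x y. quad a b c d e g x y = 0) \<longleftrightarrow> a = 0 \<and> b = 0 \<and> c = 0 \<and> d = 0 \<and> e = 0 \<and> g = 0"
proof
  assume Z: "\<forall>x y. quad a b c d e g x y = 0"
  have "g = 0" "a + d + g = 0" "a - d + g = 0" "c + e + g = 0" "c - e + g = 0" "a + b + c + d + e + g = 0"
    using Z[rule_format, of 0 0] Z[rule_format, of 1 0] Z[rule_format, of "-1" 0]
      Z[rule_format, of 0 1] Z[rule_format, of 0 "-1"] Z[rule_format, of 1 1]
    by (simp_all add: quad_def qform_def)
  then show "a = 0 \<and> b = 0 \<and> c = 0 \<and> d = 0 \<and> e = 0 \<and> g = 0" by linarith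
qed (simp add: quad_def qform_def)

lemma quad_eq_iff_coeffs:
  "(\<forall>x y. quad a b c d e g x y = quad a' b' c' d' e' g' x y) \<longleftrightarrow>
     a = a' \<and> b = b' \<and> c = c' \<and> d = d' \<and> e = e' \<and> g = g'"
proof -
  have "quad a b c d e g x y = quad a' b' c' d' e' g' x y \<longleftrightarrow>
      quad (a - a') (b - b') (c - c') (d - d') (e - e') (g - g') x y = 0" for x y
    by (auto simp: quad_def qform_def algebra_simps)
  then show ?thesis
    using quad_eq_0_iff_coeffs[of "a - a'" "b - b'" "c - c'" "d - d'" "e - e'" "g - g'"] by simp
qed

lemma quad_affine_pullback:
  "quad a b c d e g (m1 * x + m2 * y + t1) (m3 * x + m4 * y + t2) =
   quad (qform a b c m1 m3) (2 * a * m1 * m2 + b * (m1 * m4 + m2 * m3) + 2 * c * m3 * m4)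
        (qform a b c m2 m4)
        (2 * a * m1 * t1 + b * (m1 * t2 + m3 * t1) + 2 * c * m3 * t2 + d * m1 + e * m3)
        (2 * a * m2 * t1 + b * (m2 * t2 + m4 * t1) + 2 * c * m4 * t2 + d * m2 + e * m4)
        (quad a b c d e g t1 t2) x y"
  unfolding quad_def qform_def by (simp add: power2_eq_square algebra_simps)

lemma quad_det_affine_pullback:
  "quad_det (qform a b c m1 m3) (2 * a * m1 * m2 + b * (m1 * m4 + m2 * m3) + 2 * c * m3 * m4)
        (qform a b c m2 m4)
        (2 * a * m1 * t1 + b * (m1 * t2 + m3 * t1) + 2 * c * m3 * t2 + d * m1 + e * m3)
        (2 * a * m2 * t1 + b * (m2 * t2 + m4 * t1) + 2 * c * m4 * t2 + d * m2 + e * m4)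
        (quad a b c d e g t1 t2)
   = (m1 * m4 - m2 * m3)\<^sup>2 * quad_det a b c d e g"
  unfolding quad_det_def quad_def qform_def by (simp add: power2_eq_square algebra_simps)

lemma quad_affine_eigen:
  assumes "\<And>x y. quad a b c d e g (m1 * x + m2 * y + t1) (m3 * x + m4 * y + t2) = k * quad a b c d e g x y"
  shows "(m1 * m4 - m2 * m3)\<^sup>2 * quad_det a b c d e g = k ^ 3 * quad_det a b c d e g"
    and "qform a b c (m1 * v1 + m2 * v2) (m3 * v1 + m4 * v2) = k * qform a b c v1 v2"
proof -
  have "\<forall>x y. quad (qform a b c m1 m3) (2 * a * m1 * m2 + b * (m1 * m4 + m2 * m3) + 2 * c * m3 * m4)
        (qform a b c m2 m4)
        (2 * a * m1 * t1 + b * (m1 * t2 + m3 * t1) + 2 * c * m3 * t2 + d * m1 + e * m3)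
        (2 * a * m2 * t1 + b * (m2 * t2 + m4 * t1) + 2 * c * m4 * t2 + d * m2 + e * m4)
        (quad a b c d e g t1 t2) x y =
      quad (k * a) (k * b) (k * c) (k * d) (k * e) (k * g) x y"
    using assms by (simp add: quad_affine_pullback[symmetric]) (simp add: quad_def qform_def algebra_simps)
  then have coeffs: "qform a b c m1 m3 = k * a"
      "2 * a * m1 * m2 + b * (m1 * m4 + m2 * m3) + 2 * c * m3 * m4 = k * b"
      "qform a b c m2 m4 = k * c"
      "2 * a * m1 * t1 + b * (m1 * t2 + m3 * t1) + 2 * c * m3 * t2 + d * m1 + e * m3 = k * d"
      "2 * a * m2 * t1 + b * (m2 * t2 + m4 * t1) + 2 * c * m4 * t2 + d * m2 + e * m4 = k * e"
      "quad a b c d e g t1 t2 = k * g"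
    unfolding quad_eq_iff_coeffs by blast+
  have "quad_det (k * a) (k * b) (k * c) (k * d) (k * e) (k * g) = k ^ 3 * quad_det a b c d e g"
    unfolding quad_det_def by (simp add: power2_eq_square power3_eq_cube algebra_simps)
  then show "(m1 * m4 - m2 * m3)\<^sup>2 * quad_det a b c d e g = k ^ 3 * quad_det a b c d e g"
    using quad_det_affine_pullback[of a b c m1 m3 m2 m4 t1 t2 d e g] by (auto simp: coeffs)
  have "qform a b c (m1 * v1 + m2 * v2) (m3 * v1 + m4 * v2) =
      qform a b c m1 m3 * v1\<^sup>2 + (2 * a * m1 * m2 + b * (m1 * m4 + m2 * m3) + 2 * c * m3 * m4) * v1 * v2
      + qform a b c m2 m4 * v2\<^sup>2"
    unfolding qform_def by (simp add: power2_eq_square algebra_simps)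
  also have "\<dots> = k * a * v1\<^sup>2 + k * b * v1 * v2 + k * c * v2\<^sup>2"
    by (simp add: coeffs)
  finally show "qform a b c (m1 * v1 + m2 * v2) (m3 * v1 + m4 * v2) = k * qform a b c v1 v2"
    by (simp add: qform_def algebra_simps)
qed

lemma quadratic_lincomb:
  assumes "quadratic G" "quadratic H"
  shows "quadratic (\<lambda>x y. \<alpha> * G x y - \<beta> * H x y)"
proof -
  obtain a b c d e g where "\<And>x y. G x y = quad a b c d e g x y"
    using assms(1) unfolding quadratic_def by blast
  moreover obtain a' b' c' d' e' g' where "\<And>x y. H x y = quad a' b' c' d' e' g' x y"
    using assms(2) unfolding quadratic_def by blast
  ultimately have "\<alpha> * G x y - \<beta> * H x y =
      quad (\<alpha> * a - \<beta> * a') (\<alpha> * b - \<beta> * b') (\<alpha> * c - \<beta> * c') (\<alpha> * d - \<beta> * d')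
        (\<alpha> * e - \<beta> * e') (\<alpha> * g - \<beta> * g') x y" for x y
    by (simp add: quad_def qform_def algebra_simps)
  then show ?thesis unfolding quadratic_def by blast
qed

lemma quadratic_affine_comp:
  "quadratic G \<Longrightarrow> quadratic (\<lambda>x y. G (m1 * x + m2 * y + t1) (m3 * x + m4 * y + t2))"
  unfolding quadratic_def using quad_affine_pullback by metis

lemma quadratic_circle: "quadratic (\<lambda>x y. (x - q1)\<^sup>2 + (y - q2)\<^sup>2 - \<rho>)"
  unfolding quadratic_def quad_def qform_def
  by (intro exI[of _ 1] exI[of _ 0] exI[of _ "- 2 * q1"] exI[of _ "- 2 * q2"] exI[of _ "q1\<^sup>2 + q2\<^sup>2 - \<rho>"])
    (simp add: power2_eq_square algebra_simps)

lemma power_difference_eq_quad: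
  "(x - p1)\<^sup>2 + (y - p2)\<^sup>2 - (m1 * x + m2 * y + t1 - q1)\<^sup>2 - (m3 * x + m4 * y + t2 - q2)\<^sup>2 =
   quad (1 - m1\<^sup>2 - m3\<^sup>2) (- 2 * (m1 * m2 + m3 * m4)) (1 - m2\<^sup>2 - m4\<^sup>2)
     (- 2 * p1 - 2 * m1 * (t1 - q1) - 2 * m3 * (t2 - q2)) (- 2 * p2 - 2 * m2 * (t1 - q1) - 2 * m4 * (t2 - q2))
     (p1\<^sup>2 + p2\<^sup>2 - (t1 - q1)\<^sup>2 - (t2 - q2)\<^sup>2) x y"
  unfolding quad_def qform_def by (simp add: power2_eq_square algebra_simps)

lemma quadratic_power_difference:
  "quadratic (\<lambda>x y. (x - p1)\<^sup>2 + (y - p2)\<^sup>2 - (m1 * x + m2 * y + t1 - q1)\<^sup>2 - (m3 * x + m4 * y + t2 - q2)\<^sup>2)"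
  unfolding quadratic_def power_difference_eq_quad by blast

lemma three_roots_imp_coeffs_0:
  fixes a b c s1 s2 s3 :: real
  assumes "a * s1\<^sup>2 + b * s1 + c = 0" "a * s2\<^sup>2 + b * s2 + c = 0" "a * s3\<^sup>2 + b * s3 + c = 0"
    and "s1 \<noteq> s2" "s1 \<noteq> s3" "s2 \<noteq> s3"
  shows "a = 0 \<and> b = 0 \<and> c = 0"
proof -
  have "(s1 - s2) * (a * (s1 + s2) + b) = 0" "(s1 - s3) * (a * (s1 + s3) + b) = 0"
    using assms(1-3) by (simp_all add: algebra_simps power2_eq_square)
  then have 12: "a * (s1 + s2) + b = 0" and 13: "a * (s1 + s3) + b = 0" using assms(4,5) by simp_all
  have "a * (s2 - s3) = 0" using arg_cong2[OF 12 13, of "(-)"] by (simp add: algebra_simps)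
  then have "a = 0" using assms(6) by simp
  then show ?thesis using 12 assms(1) by simp
qed

text \<open>In the coordinates \<open>(s, r)\<close> of \<open>u + s w + r w\<^sup>\<bottom>\<close>, the restriction to the line \<open>r = 0\<close>
  is a quadratic in \<open>s\<close> with three roots, so it vanishes and \<open>r\<close> divides the quadratic.\<close>
lemma quadratic_vanishing_on_line_factors:
  assumes G: "quadratic G" and w: "(w1, w2) \<noteq> (0, 0)"
    and zeros: "G (u1 + s1 * w1) (u2 + s1 * w2) = 0" "G (u1 + s2 * w1) (u2 + s2 * w2) = 0"
      "G (u1 + s3 * w1) (u2 + s3 * w2) = 0"
    and distinct: "s1 \<noteq> s2" "s1 \<noteq> s3" "s2 \<noteq> s3"
  shows "\<exists>m1 m2 m0. \<forall>x y. G x y = (w1 * (y - u2) - w2 * (x - u1)) * (m1 * x + m2 * y + m0)"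
proof -
  obtain a b c d e g where Gq: "\<And>x y. G x y = quad a b c d e g x y"
    using G unfolding quadratic_def by blast
  define \<alpha> where "\<alpha> = qform a b c w1 w2"
  define \<beta> where "\<beta> = 2 * a * u1 * w1 + b * (u1 * w2 + u2 * w1) + 2 * c * u2 * w2 + d * w1 + e * w2"
  define \<gamma> where "\<gamma> = quad a b c d e g u1 u2"
  define B where "B = - 2 * a * w1 * w2 + b * (w1\<^sup>2 - w2\<^sup>2) + 2 * c * w1 * w2"
  define C where "C = qform a b c w2 (- w1)"
  define E where "E = - 2 * a * u1 * w2 + b * (u1 * w1 - u2 * w2) + 2 * c * u2 * w1 - d * w2 + e * w1"
  have expand: "G (u1 + s * w1 - r * w2) (u2 + s * w2 + r * w1) =
      \<alpha> * s\<^sup>2 + \<beta> * s + \<gamma> + r * (s * B + r * C + E)" for s r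
    unfolding Gq quad_def qform_def \<alpha>_def \<beta>_def \<gamma>_def B_def C_def E_def
    by (simp add: power2_eq_square algebra_simps)
  have restrict: "G (u1 + s * w1) (u2 + s * w2) = \<alpha> * s\<^sup>2 + \<beta> * s + \<gamma>" for s
    using expand[of s 0] by simp
  have "\<alpha> = 0 \<and> \<beta> = 0 \<and> \<gamma> = 0"
    by (rule three_roots_imp_coeffs_0[OF _ _ _ distinct]) (use zeros restrict in auto)
  then have factored: "G (u1 + s * w1 - r * w2) (u2 + s * w2 + r * w1) = r * (s * B + r * C + E)" for s r
    using expand by simp
  define N where "N = w1\<^sup>2 + w2\<^sup>2"
  have N: "N \<noteq> 0" using w unfolding N_def by (auto simp: sum_power2_eq_zero_iff)
  define s where "s x y = ((x - u1) * w1 + (y - u2) * w2) / N" for x y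
  define r where "r x y = (w1 * (y - u2) - w2 * (x - u1)) / N" for x y
  have "G x y = (w1 * (y - u2) - w2 * (x - u1)) * ((s x y * B + r x y * C + E) / N)" for x y
  proof -
    have "(u1 + s x y * w1 - r x y * w2) * N = x * N" "(u2 + s x y * w2 + r x y * w1) * N = y * N"
      unfolding s_def r_def using N
      by (simp_all add: field_simps) (simp_all add: N_def algebra_simps power2_eq_square)
    then have "G x y = r x y * (s x y * B + r x y * C + E)"
      using factored[of "s x y" "r x y"] N by simp
    then show ?thesis unfolding r_def by simp
  qed
  moreover have "(s x y * B + r x y * C + E) / N =
      (w1 * B - w2 * C) / N / N * x + (w2 * B + w1 * C) / N / N * y
      + ((- u1 * w1 - u2 * w2) * B / N + (u1 * w2 - u2 * w1) * C / N + E) / N" for x y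
    unfolding s_def r_def using N by (simp add: field_simps)
  ultimately show ?thesis by metis
qed

lemma quad_det_eq_0_imp_kernel:
  assumes "quad_det a b c d e g = 0"
  obtains z1 z2 z3 where "(z1, z2, z3) \<noteq> (0, 0, 0)" "2 * a * z1 + b * z2 + d * z3 = 0"
    "b * z1 + 2 * c * z2 + e * z3 = 0" "d * z1 + e * z2 + 2 * g * z3 = 0"
proof -
  define H :: "real^3^3" where "H = vector [vector [2 * a, b, d], vector [b, 2 * c, e], vector [d, e, 2 * g]]"
  have "det H = 2 * quad_det a b c d e g"
    unfolding H_def det_3 quad_det_def by (simp add: power2_eq_square algebra_simps)
  then have "\<not> invertible H" using assms by (simp add: invertible_det_nz)
  then obtain z where z: "H *v z = 0" "z \<noteq> 0"
    using invertible_left_inverse matrix_left_invertible_ker by metis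
  have "(z$1, z$2, z$3) \<noteq> (0, 0, 0)"
    using z(2) by (auto simp: vec_eq_iff forall_3)
  moreover have "(H *v z)$1 = 0" "(H *v z)$2 = 0" "(H *v z)$3 = 0" using z(1) by simp_all
  ultimately show ?thesis
    using that[of "z$1" "z$2" "z$3"] unfolding H_def matrix_vector_mult_def by (simp add: sum_3)
qed

lemma quad_cone:
  assumes "2 * a * k1 + b * k2 + d = 0" "b * k1 + 2 * c * k2 + e = 0" "d * k1 + e * k2 + 2 * g = 0"
  shows "quad a b c d e g (k1 + s * v1) (k2 + s * v2) = s\<^sup>2 * quad a b c d e g (k1 + v1) (k2 + v2)"
proof -
  have "quad a b c d e g (k1 + s * v1) (k2 + s * v2) = s\<^sup>2 * qform a b c v1 v2
      + s * (v1 * (2 * a * k1 + b * k2 + d) + v2 * (b * k1 + 2 * c * k2 + e))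
      + (k1 * (2 * a * k1 + b * k2 + d) + k2 * (b * k1 + 2 * c * k2 + e) + (d * k1 + e * k2 + 2 * g)) / 2"
    for s
    unfolding quad_def qform_def by (simp add: algebra_simps power2_eq_square)
  from this[of s] this[of 1] show ?thesis using assms by simp
qed

lemma quad_cylinder:
  assumes "2 * a * z1 + b * z2 = 0" "b * z1 + 2 * c * z2 = 0" "d * z1 + e * z2 = 0"
  shows "quad a b c d e g (v1 + s * z1) (v2 + s * z2) = quad a b c d e g v1 v2"
proof -
  have "quad a b c d e g (v1 + s * z1) (v2 + s * z2) = quad a b c d e g v1 v2
      + s * (v1 * (2 * a * z1 + b * z2) + v2 * (b * z1 + 2 * c * z2) + (d * z1 + e * z2))
      + s\<^sup>2 * (z1 * (2 * a * z1 + b * z2) + z2 * (b * z1 + 2 * c * z2)) / 2"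
    unfolding quad_def qform_def by (simp add: algebra_simps power2_eq_square)
  then show ?thesis using assms by simp
qed

section \<open>Binary quadratic forms invariant under a linear map\<close>

lemma qform_eigen_coeffs:
  assumes "\<And>v1 v2. qform a b c (m1 * v1 + m2 * v2) (m3 * v1 + m4 * v2) = k * qform a b c v1 v2"
  shows "qform a b c m1 m3 = k * a" "qform a b c m2 m4 = k * c"
    and "2 * a * m1 * m2 + b * (m1 * m4 + m2 * m3) + 2 * c * m3 * m4 = k * b"
proof -
  show A: "qform a b c m1 m3 = k * a" and C: "qform a b c m2 m4 = k * c"
    using assms[of 1 0] assms[of 0 1] by (simp_all add: qform_def)
  have "qform a b c (m1 + m2) (m3 + m4) = k * (a + b + c)"
    using assms[of 1 1] by (simp add: qform_def)
  moreover have "qform a b c (m1 + m2) (m3 + m4) = qform a b c m1 m3 + qform a b c m2 m4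
      + (2 * a * m1 * m2 + b * (m1 * m4 + m2 * m3) + 2 * c * m3 * m4)"
    by (simp add: qform_def power2_eq_square algebra_simps)
  ultimately show "2 * a * m1 * m2 + b * (m1 * m4 + m2 * m3) + 2 * c * m3 * m4 = k * b"
    using A C by (simp add: algebra_simps)
qed

text \<open>The discriminant of a binary quadratic form transforms with the square of the determinant.\<close>
lemma qform_eigen_nondegenerate:
  assumes "\<And>v1 v2. qform a b c (m1 * v1 + m2 * v2) (m3 * v1 + m4 * v2) = k * qform a b c v1 v2"
    and "4 * a * c - b\<^sup>2 \<noteq> 0"
  shows "k\<^sup>2 = (m1 * m4 - m2 * m3)\<^sup>2"
proof -
  note coeffs = qform_eigen_coeffs[OF assms(1)]
  have "4 * qform a b c m1 m3 * qform a b c m2 m4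
      - (2 * a * m1 * m2 + b * (m1 * m4 + m2 * m3) + 2 * c * m3 * m4)\<^sup>2
      = (m1 * m4 - m2 * m3)\<^sup>2 * (4 * a * c - b\<^sup>2)"
    unfolding qform_def by (simp add: power2_eq_square algebra_simps)
  then have "k\<^sup>2 * (4 * a * c - b\<^sup>2) = (m1 * m4 - m2 * m3)\<^sup>2 * (4 * a * c - b\<^sup>2)"
    unfolding coeffs by (simp add: power2_eq_square algebra_simps)
  then show ?thesis using assms(2) by simp
qed

lemma qform_degenerate_eq_square:
  assumes "4 * a * c - b\<^sup>2 = 0" and "\<not> (a = 0 \<and> b = 0 \<and> c = 0)"
  obtains \<alpha>1 \<alpha>2 \<kappa> where "(\<alpha>1, \<alpha>2) \<noteq> (0, 0)" "\<kappa> \<noteq> 0"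
    "\<And>v1 v2. qform a b c v1 v2 = \<kappa> * (\<alpha>1 * v1 + \<alpha>2 * v2)\<^sup>2"
proof (cases "a = 0")
  case False
  have "qform a b c v1 v2 = (1 / a) * (a * v1 + (b / 2) * v2)\<^sup>2" for v1 v2
    using False assms(1) by (simp add: qform_def field_simps power2_eq_square)
  then show ?thesis using that[of a "b / 2" "1 / a"] False by simp
next
  case True
  then have "b = 0" "c \<noteq> 0" using assms by auto
  then have "qform a b c v1 v2 = (1 / c) * (0 * v1 + c * v2)\<^sup>2" for v1 v2
    using True by (simp add: qform_def field_simps power2_eq_square)
  then show ?thesis using that[of 0 c "1 / c"] \<open>c \<noteq> 0\<close> by simp
qed

lemma perpendicular_same_length:
  fixes a1 a2 u1 u2 :: real
  assumes "a1 * u1 + a2 * u2 = 0" "u1\<^sup>2 + u2\<^sup>2 = a1\<^sup>2 + a2\<^sup>2" "a1\<^sup>2 + a2\<^sup>2 \<noteq> 0"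
  obtains \<nu> where "u1 = \<nu> * (- a2)" "u2 = \<nu> * a1" "\<nu>\<^sup>2 = 1"
proof -
  define L where "L = a1\<^sup>2 + a2\<^sup>2"
  define \<nu> where "\<nu> = (u1 * (- a2) + u2 * a1) / L"
  have L: "L \<noteq> 0" using assms(3) unfolding L_def .
  have "u1 * L = (u1 * (- a2) + u2 * a1) * (- a2) + (a1 * u1 + a2 * u2) * a1"
    "u2 * L = (u1 * (- a2) + u2 * a1) * a1 + (a1 * u1 + a2 * u2) * a2"
    unfolding L_def by (simp_all add: power2_eq_square algebra_simps)
  then have u: "u1 = \<nu> * (- a2)" "u2 = \<nu> * a1"
    using assms(1) L unfolding \<nu>_def by (simp_all add: field_simps)
  then have "\<nu>\<^sup>2 * L = L" using assms(2) unfolding L_def by (simp add: power2_eq_square algebra_simps)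
  then have "\<nu>\<^sup>2 = 1" using L by simp
  with u show ?thesis by (rule that)
qed

text \<open>If the defect form \<open>|v|\<^sup>2 - |M v|\<^sup>2\<close> is degenerate and nonzero, it is
  \<open>\<kappa> (\<alpha> \<cdot> v)\<^sup>2\<close>; then \<open>M\<close> maps the null direction \<open>\<alpha>\<^sup>\<bottom>\<close> to a vector of the same length
  on the same line, and comparing determinants gives \<open>det M\<^sup>2 = k\<close>.\<close>
lemma isometry_defect_eigen_degenerate:
  fixes m1 m2 m3 m4 k :: real
  defines "a \<equiv> 1 - m1\<^sup>2 - m3\<^sup>2" and "b \<equiv> - 2 * (m1 * m2 + m3 * m4)" and "c \<equiv> 1 - m2\<^sup>2 - m4\<^sup>2"
  assumes eig: "\<And>v1 v2. qform a b c (m1 * v1 + m2 * v2) (m3 * v1 + m4 * v2) = k * qform a b c v1 v2"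
    and disc: "4 * a * c - b\<^sup>2 = 0" and nz: "\<not> (a = 0 \<and> b = 0 \<and> c = 0)"
  shows "(m1 * m4 - m2 * m3)\<^sup>2 = k"
proof -
  obtain al1 al2 \<kappa> where al: "(al1, al2) \<noteq> (0, 0)" "\<kappa> \<noteq> 0"
    and sq: "\<And>v1 v2. qform a b c v1 v2 = \<kappa> * (al1 * v1 + al2 * v2)\<^sup>2"
    using qform_degenerate_eq_square[OF disc nz] by blast
  have defect: "qform a b c v1 v2 = v1\<^sup>2 + v2\<^sup>2 - (m1 * v1 + m2 * v2)\<^sup>2 - (m3 * v1 + m4 * v2)\<^sup>2" for v1 v2
    unfolding a_def b_def c_def qform_def by (simp add: power2_eq_square algebra_simps)
  have image_sq: "(al1 * (m1 * v1 + m2 * v2) + al2 * (m3 * v1 + m4 * v2))\<^sup>2 = k * (al1 * v1 + al2 * v2)\<^sup>2" for v1 v2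
    using eig[of v1 v2] sq[of v1 v2] sq[of "m1 * v1 + m2 * v2" "m3 * v1 + m4 * v2"] al(2) by simp
  define L where "L = al1\<^sup>2 + al2\<^sup>2"
  have L: "L \<noteq> 0" using al(1) unfolding L_def by (auto simp: sum_power2_eq_zero_iff)
  define u1 where "u1 = m1 * (- al2) + m2 * al1"
  define u2 where "u2 = m3 * (- al2) + m4 * al1"
  have u_perp: "al1 * u1 + al2 * u2 = 0"
    using image_sq[of "- al2" al1] unfolding u1_def u2_def by (simp add: algebra_simps)
  have u_len: "u1\<^sup>2 + u2\<^sup>2 = L"
    using defect[of "- al2" al1] sq[of "- al2" al1] unfolding u1_def u2_def L_def
    by (simp add: algebra_simps)
  obtain \<nu> where u1: "u1 = \<nu> * (- al2)" and u2: "u2 = \<nu> * al1" and \<nu>: "\<nu>\<^sup>2 = 1"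
    using perpendicular_same_length u_perp u_len L unfolding L_def by blast
  define w1 where "w1 = m1 * al1 + m2 * al2"
  define w2 where "w2 = m3 * al1 + m4 * al2"
  have "(m1 * m4 - m2 * m3) * L = w1 * u2 - w2 * u1"
    unfolding w1_def w2_def u1_def u2_def L_def by (simp add: power2_eq_square algebra_simps)
  also have "\<dots> = \<nu> * (al1 * w1 + al2 * w2)"
    unfolding u1 u2 by (simp add: algebra_simps)
  finally have "((m1 * m4 - m2 * m3) * L)\<^sup>2 = \<nu>\<^sup>2 * (al1 * w1 + al2 * w2)\<^sup>2"
    by (simp add: power_mult_distrib)
  also have "(al1 * w1 + al2 * w2)\<^sup>2 = k * L\<^sup>2"
    using image_sq[of al1 al2] unfolding w1_def w2_def L_def by (simp add: power2_eq_square)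
  finally have "(m1 * m4 - m2 * m3)\<^sup>2 * L\<^sup>2 = k * L\<^sup>2" using \<nu> by (simp add: power_mult_distrib)
  then show ?thesis using L by simp
qed

text \<open>The Gram matrix \<open>S = M\<^sup>T M\<close> has \<open>det S = 1\<close>, and invariance of the defect form
  makes the Gram matrix of \<open>M\<^sup>2\<close> equal to \<open>2S - I\<close>; taking determinants forces \<open>tr S = 2\<close>,
  hence \<open>S = I\<close>.\<close>
lemma isometry_defect_invariant_imp_orthogonal:
  fixes m1 m2 m3 m4 :: real
  defines "a \<equiv> 1 - m1\<^sup>2 - m3\<^sup>2" and "b \<equiv> - 2 * (m1 * m2 + m3 * m4)" and "c \<equiv> 1 - m2\<^sup>2 - m4\<^sup>2"
  assumes eig: "\<And>v1 v2. qform a b c (m1 * v1 + m2 * v2) (m3 * v1 + m4 * v2) = qform a b c v1 v2"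
    and det: "(m1 * m4 - m2 * m3)\<^sup>2 = 1"
  shows "a = 0 \<and> b = 0 \<and> c = 0"
proof -
  note coeffs = qform_eigen_coeffs[of a b c m1 m2 m3 m4 1, simplified, OF eig]
  define x where "x = m1\<^sup>2 + m3\<^sup>2"
  define y where "y = m2\<^sup>2 + m4\<^sup>2"
  define z where "z = m1 * m2 + m3 * m4"
  have gram_det: "x * y - z\<^sup>2 = 1"
    using det unfolding x_def y_def z_def by (simp add: power2_eq_square algebra_simps)
  define n1 where "n1 = m1 * m1 + m2 * m3"
  define n2 where "n2 = m1 * m2 + m2 * m4"
  define n3 where "n3 = m3 * m1 + m4 * m3"
  define n4 where "n4 = m3 * m2 + m4 * m4"
  have abc: "a = 1 - x" "b = - 2 * z" "c = 1 - y" unfolding a_def b_def c_def x_def y_def z_def by simp_all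
  have "qform a b c m1 m3 = x - (n1\<^sup>2 + n3\<^sup>2)"
      "2 * a * m1 * m2 + b * (m1 * m4 + m2 * m3) + 2 * c * m3 * m4 = 2 * (z - (n1 * n2 + n3 * n4))"
      "qform a b c m2 m4 = y - (n2\<^sup>2 + n4\<^sup>2)"
    unfolding abc qform_def x_def y_def z_def n1_def n2_def n3_def n4_def
    by (simp_all add: power2_eq_square algebra_simps)
  then have "n1\<^sup>2 + n3\<^sup>2 = 2 * x - 1" "n1 * n2 + n3 * n4 = 2 * z" "n2\<^sup>2 + n4\<^sup>2 = 2 * y - 1"
    using coeffs abc by simp_all
  moreover have "(n1\<^sup>2 + n3\<^sup>2) * (n2\<^sup>2 + n4\<^sup>2) - (n1 * n2 + n3 * n4)\<^sup>2 = ((m1 * m4 - m2 * m3)\<^sup>2)\<^sup>2"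
    unfolding n1_def n2_def n3_def n4_def by (simp add: power2_eq_square algebra_simps)
  ultimately have "(2 * x - 1) * (2 * y - 1) - (2 * z)\<^sup>2 = 1" using det by simp
  then have "x + y = 2" using gram_det by (simp add: power2_eq_square algebra_simps)
  have "(x - y)\<^sup>2 + (2 * z)\<^sup>2 = (x + y)\<^sup>2 - 4 * (x * y - z\<^sup>2)"
    by (simp add: power2_eq_square algebra_simps)
  then have "(x - y)\<^sup>2 + (2 * z)\<^sup>2 = 0" using \<open>x + y = 2\<close> gram_det by simp
  then have "x - y = 0 \<and> 2 * z = 0" by (rule sum_power2_eq_zero_iff[THEN iffD1])
  then have "x = y" "z = 0" by simp_all
  then show ?thesis using \<open>x + y = 2\<close> unfolding a_def b_def c_def x_def y_def z_def by simp
qed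

lemma isometry_defect_eigen_imp_orthogonal:
  fixes m1 m2 m3 m4 k :: real
  defines "a \<equiv> 1 - m1\<^sup>2 - m3\<^sup>2" and "b \<equiv> - 2 * (m1 * m2 + m3 * m4)" and "c \<equiv> 1 - m2\<^sup>2 - m4\<^sup>2"
  assumes eig: "\<And>v1 v2. qform a b c (m1 * v1 + m2 * v2) (m3 * v1 + m4 * v2) = k * qform a b c v1 v2"
    and "k \<noteq> 0" and det: "(m1 * m4 - m2 * m3)\<^sup>2 = k ^ 3"
  shows "a = 0 \<and> b = 0 \<and> c = 0"
proof (cases "a = 0 \<and> b = 0 \<and> c = 0")
  case False
  have "k = 1"
  proof (cases "4 * a * c - b\<^sup>2 = 0")
    case True
    have "(m1 * m4 - m2 * m3)\<^sup>2 = k"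
      using isometry_defect_eigen_degenerate[of m1 m3 m2 m4 k] eig True False
      unfolding a_def b_def c_def by blast
    then have "k * (k - 1) * (k + 1) = 0" "k \<ge> 0"
      using det by (auto simp: power3_eq_cube algebra_simps)
    then show "k = 1" using \<open>k \<noteq> 0\<close> by auto
  next
    case False
    then have "k\<^sup>2 * (k - 1) = 0"
      using qform_eigen_nondegenerate[OF eig] det by (simp add: power2_eq_square power3_eq_cube algebra_simps)
    then show "k = 1" using \<open>k \<noteq> 0\<close> by simp
  qed
  then show ?thesis
    using isometry_defect_invariant_imp_orthogonal[of m1 m3 m2 m4] eig det
    unfolding a_def b_def c_def by simp
qed simp

section \<open>Bivariate polynomials and lines\<close>

lemma eval2_eq_0_iff: "(\<forall>x y. eval2 f x y = 0) \<longleftrightarrow> f = 0"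
proof
  assume Z: "\<forall>x y. eval2 f x y = 0"
  have "map_poly (\<lambda>c. poly c x) f = 0" for x
    using Z unfolding eval2_def by (simp add: poly_all_0_iff_0)
  then have "poly (coeff f j) x = 0" for j x
    by (metis coeff_0 coeff_map_poly poly_0)
  then have "coeff f j = 0" for j
    using poly_all_0_iff_0 by blast
  then show "f = 0" by (simp add: poly_eqI)
qed (simp add: eval2_def)

lemma coeff_coeff_eq_0_if_tdeg_less:
  assumes "tdeg f < i + j"
  shows "coeff (coeff f j) i = 0"
proof (rule ccontr)
  assume nz: "coeff (coeff f j) i \<noteq> 0"
  let ?S = "{degree (coeff f j) + j | j. coeff f j \<noteq> 0} \<union> {0}"
  have "{degree (coeff f j) + j | j. coeff f j \<noteq> 0} \<subseteq> (\<lambda>j. degree (coeff f j) + j) ` {..degree f}"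
    by (auto intro: le_degree)
  then have "finite ?S" by (simp add: finite_subset)
  moreover have "degree (coeff f j) + j \<in> ?S" using nz by auto
  ultimately have "degree (coeff f j) + j \<le> tdeg f" unfolding tdeg_def by simp
  moreover have "i \<le> degree (coeff f j)" using nz by (simp add: le_degree)
  ultimately show False using assms by simp
qed

lemma eval2_eq_quad:
  assumes "tdeg f \<le> 2"
  shows "eval2 f x y = quad (coeff (coeff f 0) 2) (coeff (coeff f 1) 1) (coeff (coeff f 2) 0)
           (coeff (coeff f 0) 1) (coeff (coeff f 1) 0) (coeff (coeff f 0) 0) x y"
proof -
  let ?c = "\<lambda>j i. coeff (coeff f j) i"
  have "f = [: [:?c 0 0, ?c 0 1, ?c 0 2:], [:?c 1 0, ?c 1 1:], [:?c 2 0:] :]"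
  proof (intro poly_eqI)
    fix j i
    have "j = 0 \<or> j = 1 \<or> j = 2 \<or> j \<ge> (3::nat)" "i = 0 \<or> i = 1 \<or> i = 2 \<or> i \<ge> (3::nat)" by linarith+
    then show "coeff (coeff f j) i = coeff (coeff [: [:?c 0 0, ?c 0 1, ?c 0 2:], [:?c 1 0, ?c 1 1:], [:?c 2 0:] :] j) i"
      using coeff_coeff_eq_0_if_tdeg_less[of f i j] assms
      by (auto simp: coeff_pCons numeral_2_eq_2 numeral_3_eq_3 split: nat.split)
  qed
  then have "eval2 f x y = eval2 [: [:?c 0 0, ?c 0 1, ?c 0 2:], [:?c 1 0, ?c 1 1:], [:?c 2 0:] :] x y"
    by simp
  then show ?thesis unfolding eval2_def quad_def qform_def
    by (simp add: map_poly_pCons algebra_simps power2_eq_square)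
qed

lemma quadratic_eval2: "tdeg f \<le> 2 \<Longrightarrow> quadratic (eval2 f)"
  unfolding quadratic_def using eval2_eq_quad by blast

lemma eval2_tdeg_0: "tdeg f = 0 \<Longrightarrow> eval2 f x y = coeff (coeff f 0) 0"
  using eval2_eq_quad[of f x y] coeff_coeff_eq_0_if_tdeg_less[of f]
  by (simp add: quad_def qform_def)

definition line_poly :: "real \<Rightarrow> real \<Rightarrow> real \<Rightarrow> real poly poly" where
  "line_poly a b c = [: [:- c, a:], [:b:] :]"

lemma zset_line_poly: "zset (line_poly a b c) = lin a b c"
  unfolding zset_def lin_def eval2_def line_poly_def by (auto simp: map_poly_pCons algebra_simps)

lemma tdeg_line_poly:
  assumes "(a, b) \<noteq> (0, 0)"
  shows "tdeg (line_poly a b c) = 1"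
proof -
  let ?f = "line_poly a b c"
  let ?A = "{degree (coeff ?f j) + j | j. coeff ?f j \<noteq> 0}"
  have "?A \<subseteq> {0, 1}"
  proof
    fix n assume "n \<in> ?A"
    then obtain j where "n = degree (coeff ?f j) + j" "coeff ?f j \<noteq> 0" by blast
    then show "n \<in> {0, 1}"
      by (cases j) (auto simp: line_poly_def coeff_pCons degree_pCons_eq_if split: nat.splits if_splits)
  qed
  moreover have "1 \<in> ?A"
  proof (cases "a = 0")
    case True
    then have "coeff ?f 1 \<noteq> 0" "degree (coeff ?f 1) + 1 = 1" using assms by (auto simp: line_poly_def)
    then show ?thesis by (metis (mono_tags, lifting) mem_Collect_eq)
  next
    case False
    then have "coeff ?f 0 \<noteq> 0" "degree (coeff ?f 0) + 0 = 1" by (auto simp: line_poly_def)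
    then show ?thesis by (metis (mono_tags, lifting) mem_Collect_eq)
  qed
  ultimately have "?A \<union> {0} = {0, 1}" by auto
  then show ?thesis unfolding tdeg_def by simp
qed

lemma lin_param:
  assumes "(a, b) \<noteq> (0, 0)"
  shows "(c * a / (a\<^sup>2 + b\<^sup>2) - s * b, c * b / (a\<^sup>2 + b\<^sup>2) + s * a) \<in> lin a b c"
proof -
  have N: "a\<^sup>2 + b\<^sup>2 \<noteq> 0" using assms by (auto simp: sum_power2_eq_zero_iff)
  have "a * (c * a / (a\<^sup>2 + b\<^sup>2) - s * b) + b * (c * b / (a\<^sup>2 + b\<^sup>2) + s * a)
      = c * (a\<^sup>2 + b\<^sup>2) / (a\<^sup>2 + b\<^sup>2)"
    by (simp add: algebra_simps power2_eq_square add_divide_distrib)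
  also have "\<dots> = c" using N by simp
  finally show ?thesis unfolding lin_def by simp
qed

lemma infinite_lin:
  assumes "(a, b) \<noteq> (0, 0)"
  shows "infinite (lin a b c)"
proof
  assume fin: "finite (lin a b c)"
  let ?h = "\<lambda>s. (c * a / (a\<^sup>2 + b\<^sup>2) - s * b, c * b / (a\<^sup>2 + b\<^sup>2) + s * a)"
  have "inj ?h"
    by (rule injI) (use assms in auto)
  moreover have "range ?h \<subseteq> lin a b c" using lin_param[OF assms] by auto
  ultimately have "finite (UNIV :: real set)"
    using fin by (meson finite_imageD finite_subset)
  then show False using infinite_UNIV_char_0 by blast
qed

lemma is_line_lin:
  assumes "(a, b) \<noteq> (0, 0)"
  shows "is_line (lin a b c)"
proof -
  have nz: "line_poly a b c \<noteq> 0" using assms unfolding line_poly_def by auto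
  have "curve_degree (lin a b c) = 1"
    unfolding curve_degree_def
  proof (rule Least_equality)
    show "\<exists>f. f \<noteq> 0 \<and> zset f = lin a b c \<and> tdeg f = 1"
      using nz zset_line_poly tdeg_line_poly[OF assms] by blast
  next
    fix n assume "\<exists>f. f \<noteq> 0 \<and> zset f = lin a b c \<and> tdeg f = n"
    then obtain f where f: "f \<noteq> 0" "zset f = lin a b c" "tdeg f = n" by blast
    show "1 \<le> n"
    proof (rule ccontr)
      assume "\<not> 1 \<le> n"
      then have const: "eval2 f x y = coeff (coeff f 0) 0" for x y using f eval2_tdeg_0 by simp
      then have "coeff (coeff f 0) 0 \<noteq> 0" using f(1) eval2_eq_0_iff by metis
      then have "zset f = {}" unfolding zset_def using const by auto
      then show False using f(2) lin_param[OF assms, of c 0] by auto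
    qed
  qed
  moreover have "plane_curve (lin a b c)"
    unfolding plane_curve_def using infinite_lin[OF assms] nz zset_line_poly by metis
  ultimately show ?thesis unfolding is_line_def by simp
qed

section \<open>Plane geometry and counting\<close>

definition orient :: "pt \<Rightarrow> pt \<Rightarrow> pt \<Rightarrow> real" where
  "orient P Q R = (fst Q - fst P) * (snd R - snd P) - (snd Q - snd P) * (fst R - fst P)"

lemma orient_eq_0_imp_on_line:
  assumes "orient P Q R = 0" "P \<noteq> Q"
  obtains s where "R = (fst P + s * (fst Q - fst P), snd P + s * (snd Q - snd P))"
proof -
  define w1 where "w1 = fst Q - fst P"
  define w2 where "w2 = snd Q - snd P"
  define N where "N = w1\<^sup>2 + w2\<^sup>2"
  have N: "N \<noteq> 0"
    using assms(2) unfolding N_def w1_def w2_def by (auto simp: sum_power2_eq_zero_iff prod_eq_iff)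
  define s where "s = ((fst R - fst P) * w1 + (snd R - snd P) * w2) / N"
  have cross: "w1 * (snd R - snd P) - w2 * (fst R - fst P) = 0"
    using assms(1) unfolding orient_def w1_def w2_def .
  have "s * w1 * N = (fst R - fst P) * N + w2 * (w1 * (snd R - snd P) - w2 * (fst R - fst P))"
    "s * w2 * N = (snd R - snd P) * N - w1 * (w1 * (snd R - snd P) - w2 * (fst R - fst P))"
    unfolding s_def N_def using N[unfolded N_def] by (simp_all add: field_simps power2_eq_square)
  then have "s * w1 = fst R - fst P" "s * w2 = snd R - snd P" using N cross by simp_all
  then show ?thesis using that[of s] unfolding w1_def w2_def by (simp add: prod_eq_iff)
qed

lemma affine_vanishing_at_three_noncollinear:
  assumes "\<And>P. P \<in> {A, B, E} \<Longrightarrow> m1 * fst P + m2 * snd P + m0 = 0"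
    and "orient A B E \<noteq> 0"
  shows "m1 = 0 \<and> m2 = 0 \<and> m0 = 0"
proof -
  have AB: "m1 * (fst B - fst A) + m2 * (snd B - snd A) = 0"
    and AE: "m1 * (fst E - fst A) + m2 * (snd E - snd A) = 0"
    using assms(1)[of A] assms(1)[of B] assms(1)[of E] by (simp_all add: algebra_simps)
  have "m1 * orient A B E = (m1 * (fst B - fst A) + m2 * (snd B - snd A)) * (snd E - snd A)
      - (m1 * (fst E - fst A) + m2 * (snd E - snd A)) * (snd B - snd A)"
    "m2 * orient A B E = (m1 * (fst E - fst A) + m2 * (snd E - snd A)) * (fst B - fst A)
      - (m1 * (fst B - fst A) + m2 * (snd B - snd A)) * (fst E - fst A)"
    unfolding orient_def by (simp_all add: algebra_simps)
  then have "m1 * orient A B E = 0" "m2 * orient A B E = 0" using AB AE by simp_all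
  then have "m1 = 0" "m2 = 0" using assms(2) by simp_all
  then show ?thesis using assms(1)[of A] by simp
qed

lemma eq_0_if_orthogonal_to_independent:
  fixes a b d :: pt
  assumes "a \<bullet> d = 0" "b \<bullet> d = 0" "fst a * snd b - snd a * fst b \<noteq> 0"
  shows "d = 0"
proof -
  have "fst d * (fst a * snd b - snd a * fst b) = snd b * (a \<bullet> d) - snd a * (b \<bullet> d)"
    "snd d * (fst a * snd b - snd a * fst b) = fst a * (b \<bullet> d) - fst b * (a \<bullet> d)"
    by (simp_all add: inner_prod_def algebra_simps)
  then show ?thesis using assms by (simp add: prod_eq_iff)
qed

lemma cramer_2x2:
  fixes b1 b2 w1 w2 r1 r2 x y :: real
  assumes "b1 * w2 - b2 * w1 \<noteq> 0"
  shows "(b1 * x + b2 * y = r1 \<and> w1 * x + w2 * y = r2) \<longleftrightarrow>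
    x = (r1 * w2 - r2 * b2) / (b1 * w2 - b2 * w1) \<and> y = (r2 * b1 - r1 * w1) / (b1 * w2 - b2 * w1)"
proof -
  define \<Delta> where "\<Delta> = b1 * w2 - b2 * w1"
  have \<Delta>: "\<Delta> \<noteq> 0" using assms unfolding \<Delta>_def .
  have cramer: "x * \<Delta> = (b1 * x + b2 * y) * w2 - (w1 * x + w2 * y) * b2"
    "y * \<Delta> = (w1 * x + w2 * y) * b1 - (b1 * x + b2 * y) * w1"
    "(b1 * x + b2 * y) * \<Delta> = b1 * (x * \<Delta>) + b2 * (y * \<Delta>)"
    "(w1 * x + w2 * y) * \<Delta> = w1 * (x * \<Delta>) + w2 * (y * \<Delta>)"
    "b1 * (r1 * w2 - r2 * b2) + b2 * (r2 * b1 - r1 * w1) = r1 * \<Delta>"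
    "w1 * (r1 * w2 - r2 * b2) + w2 * (r2 * b1 - r1 * w1) = r2 * \<Delta>"
    unfolding \<Delta>_def by (simp_all add: algebra_simps)
  have "(b1 * x + b2 * y = r1 \<and> w1 * x + w2 * y = r2) \<longleftrightarrow>
      (x * \<Delta> = r1 * w2 - r2 * b2 \<and> y * \<Delta> = r2 * b1 - r1 * w1)"
  proof
    assume "x * \<Delta> = r1 * w2 - r2 * b2 \<and> y * \<Delta> = r2 * b1 - r1 * w1"
    then have "(b1 * x + b2 * y) * \<Delta> = r1 * \<Delta>" "(w1 * x + w2 * y) * \<Delta> = r2 * \<Delta>"
      using cramer(3-6) by simp_all
    then show "b1 * x + b2 * y = r1 \<and> w1 * x + w2 * y = r2" using \<Delta> by simp
  qed (simp add: cramer(1,2))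
  also have "\<dots> \<longleftrightarrow> x = (r1 * w2 - r2 * b2) / \<Delta> \<and> y = (r2 * b1 - r1 * w1) / \<Delta>"
    using \<Delta> by (simp add: field_simps)
  finally show ?thesis unfolding \<Delta>_def .
qed

lemma linear_system_solution:
  fixes b1 b2 w1 w2 \<alpha>1 \<alpha>2 \<beta>1 \<beta>2 \<gamma>1 \<gamma>2 :: real
  assumes "b1 * w2 - b2 * w1 \<noteq> 0"
  obtains m1 m2 t1 m3 m4 t2 where
    "\<And>x y x' y'. (b1 * x' + b2 * y' = \<alpha>1 * x + \<alpha>2 * y + \<gamma>1 \<and> w1 * x' + w2 * y' = \<beta>1 * x + \<beta>2 * y + \<gamma>2)
       \<longleftrightarrow> (x' = m1 * x + m2 * y + t1 \<and> y' = m3 * x + m4 * y + t2)"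
proof -
  define \<Delta> where "\<Delta> = b1 * w2 - b2 * w1"
  have "((\<alpha>1 * x + \<alpha>2 * y + \<gamma>1) * w2 - (\<beta>1 * x + \<beta>2 * y + \<gamma>2) * b2) / \<Delta>
      = (\<alpha>1 * w2 - \<beta>1 * b2) / \<Delta> * x + (\<alpha>2 * w2 - \<beta>2 * b2) / \<Delta> * y + (\<gamma>1 * w2 - \<gamma>2 * b2) / \<Delta>"
    "((\<beta>1 * x + \<beta>2 * y + \<gamma>2) * b1 - (\<alpha>1 * x + \<alpha>2 * y + \<gamma>1) * w1) / \<Delta>
      = (\<beta>1 * b1 - \<alpha>1 * w1) / \<Delta> * x + (\<beta>2 * b1 - \<alpha>2 * w1) / \<Delta> * y + (\<gamma>2 * b1 - \<gamma>1 * w1) / \<Delta>"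
    for x y by (simp_all add: diff_divide_distrib add_divide_distrib algebra_simps)
  then have "(b1 * x' + b2 * y' = \<alpha>1 * x + \<alpha>2 * y + \<gamma>1 \<and> w1 * x' + w2 * y' = \<beta>1 * x + \<beta>2 * y + \<gamma>2)
       \<longleftrightarrow> (x' = (\<alpha>1 * w2 - \<beta>1 * b2) / \<Delta> * x + (\<alpha>2 * w2 - \<beta>2 * b2) / \<Delta> * y + (\<gamma>1 * w2 - \<gamma>2 * b2) / \<Delta>
          \<and> y' = (\<beta>1 * b1 - \<alpha>1 * w1) / \<Delta> * x + (\<beta>2 * b1 - \<alpha>2 * w1) / \<Delta> * y + (\<gamma>2 * b1 - \<gamma>1 * w1) / \<Delta>)"
    for x y x' y'
    unfolding cramer_2x2[OF assms] \<Delta>_def[symmetric] by presburger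
  then show ?thesis by (rule that)
qed

lemma dist_sq_eq: "(dist v P)\<^sup>2 = (fst v - fst P)\<^sup>2 + (snd v - snd P)\<^sup>2" for v P :: pt
  by (simp add: dist_prod_def dist_real_def)

lemma dist_sq_diff:
  "(dist v P)\<^sup>2 - (dist v P')\<^sup>2 = (norm P)\<^sup>2 - (norm P')\<^sup>2 - 2 * ((P - P') \<bullet> v)" for v P P' :: pt
  unfolding dist_sq_eq by (simp add: norm_prod_def inner_prod_def power2_eq_square algebra_simps)

lemma dist_eq_imp_linear:
  fixes v v' P P' Q Q' :: pt
  assumes "dist v P = dist v' Q" "dist v P' = dist v' Q'"
  shows "(Q - Q') \<bullet> v' = (P - P') \<bullet> v - ((norm P)\<^sup>2 - (norm P')\<^sup>2 - (norm Q)\<^sup>2 + (norm Q')\<^sup>2) / 2"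
  using dist_sq_diff[of v P P'] dist_sq_diff[of v' Q Q'] assms by (simp add: field_simps)

lemma dist_sq_affine_combination:
  fixes v P1 P2 P3 :: pt
  assumes "P1 - P3 = l *\<^sub>R (P1 - P2)"
  shows "(dist v P3)\<^sup>2 = (1 - l) * (dist v P1)\<^sup>2 + l * (dist v P2)\<^sup>2 - l * (1 - l) * (dist P1 P2)\<^sup>2"
proof -
  have P3: "P3 = (fst P1 - l * (fst P1 - fst P2), snd P1 - l * (snd P1 - snd P2))"
    using assms by (simp add: prod_eq_iff algebra_simps)
  show ?thesis unfolding dist_sq_eq P3 by (simp add: power2_eq_square algebra_simps)
qed

lemma dist_eq_if_proportional_differences:
  fixes v v' P1 P2 P3 Q1 Q2 Q3 :: pt
  assumes "dist v P1 = dist v' Q1" "dist v P2 = dist v' Q2" "dist v P3 = dist v' Q3"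
    and P: "P1 - P3 = l *\<^sub>R (P1 - P2)" and Q: "Q1 - Q3 = l *\<^sub>R (Q1 - Q2)"
  shows "dist P1 P2 = dist Q1 Q2 \<or> dist P1 P3 = dist Q1 Q3 \<or> dist P2 P3 = dist Q2 Q3"
proof -
  have "l * (1 - l) * ((dist P1 P2)\<^sup>2 - (dist Q1 Q2)\<^sup>2) = 0"
    using dist_sq_affine_combination[OF P, of v] dist_sq_affine_combination[OF Q, of v'] assms(1-3)
    by (simp add: algebra_simps)
  then consider "l = 0" | "l = 1" | "(dist P1 P2)\<^sup>2 = (dist Q1 Q2)\<^sup>2" by force
  then show ?thesis
  proof cases
    case 1
    then show ?thesis using P Q by simp
  next
    case 2
    then have "P3 = P2" "Q3 = Q2" using P Q by (simp_all add: algebra_simps)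
    then show ?thesis by simp
  next
    case 3
    then show ?thesis by (simp add: power2_eq_iff_nonneg)
  qed
qed

lemma finite_card_le_if_distinct_lists:
  assumes "\<And>xs. set xs \<subseteq> S \<Longrightarrow> distinct xs \<Longrightarrow> length xs \<le> n"
  shows "finite S \<and> card S \<le> n"
proof (rule finite_if_finite_subsets_card_bdd)
  fix G assume "G \<subseteq> S" "finite G"
  then obtain xs where "set xs = G" "distinct xs" using finite_distinct_list by blast
  then show "card G \<le> n" using assms \<open>G \<subseteq> S\<close> distinct_card by metis
qed

lemma finite_card_le_mult_if_subset_Sigma:
  assumes "S \<subseteq> Sigma A B" "finite A" "card A \<le> a" "\<And>x. x \<in> A \<Longrightarrow> finite (B x) \<and> card (B x) \<le> b"
  shows "finite S \<and> card S \<le> a * b"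
proof -
  have fin: "finite (Sigma A B)" using assms(2,4) by blast
  have "card S \<le> card (Sigma A B)" using card_mono[OF fin assms(1)] .
  also have "\<dots> = (\<Sum>x\<in>A. card (B x))" using assms(2,4) by (simp add: card_SigmaI)
  also have "\<dots> \<le> (\<Sum>x\<in>A. b)" using assms(4) by (intro sum_mono) auto
  also have "\<dots> \<le> a * b" using assms(3) by simp
  finally show ?thesis using fin assms(1) finite_subset by blast
qed

section \<open>Conics\<close>

locale conic =
  fixes f :: "real poly poly" and C :: "pt set"
  assumes is_conic: "is_conic C" and f_nonzero: "f \<noteq> 0" and zset_f: "zset f = C"
    and tdeg_f: "tdeg f = curve_degree C"
begin

abbreviation F :: "real \<Rightarrow> real \<Rightarrow> real" where "F \<equiv> eval2 f"

lemma tdeg_eq_2: "tdeg f = 2"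
  using is_conic tdeg_f unfolding is_conic_def by simp

lemma quadratic_F: "quadratic F"
  using quadratic_eval2 tdeg_eq_2 by simp

lemma mem_C_iff: "(x, y) \<in> C \<longleftrightarrow> F x y = 0"
  using zset_f unfolding zset_def by auto

lemma infinite_C: "infinite C"
  using is_conic unfolding is_conic_def plane_curve_def by simp

lemma ex_F_nonzero: "\<exists>x y. F x y \<noteq> 0"
  using eval2_eq_0_iff f_nonzero by blast

text \<open>If \<open>F\<close> vanished at three points of a line, it would factor into two linear polynomials
  (or a linear one and a constant), contradicting that \<open>C\<close> is a conic.\<close>
lemma no_three_points_on_line:
  assumes w: "(w1, w2) \<noteq> (0, 0)"
    and on_C: "(u1 + s1 * w1, u2 + s1 * w2) \<in> C" "(u1 + s2 * w1, u2 + s2 * w2) \<in> C"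
      "(u1 + s3 * w1, u2 + s3 * w2) \<in> C"
    and distinct: "s1 \<noteq> s2" "s1 \<noteq> s3" "s2 \<noteq> s3"
  shows False
proof -
  obtain m1 m2 m0 where m: "\<And>x y. F x y = (w1 * (y - u2) - w2 * (x - u1)) * (m1 * x + m2 * y + m0)"
    using quadratic_vanishing_on_line_factors[OF quadratic_F w _ _ _ distinct] on_C
    unfolding mem_C_iff by blast
  have lw: "(- w2, w1) \<noteq> (0, 0)" using w by auto
  have "w1 * (y - u2) - w2 * (x - u1) = 0 \<longleftrightarrow> (x, y) \<in> lin (- w2) w1 (w1 * u2 - w2 * u1)"
    and "m1 * x + m2 * y + m0 = 0 \<longleftrightarrow> (x, y) \<in> lin m1 m2 (- m0)" for x y
    unfolding lin_def by (auto simp: algebra_simps)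
  then have C_split: "C = lin (- w2) w1 (w1 * u2 - w2 * u1) \<union> lin m1 m2 (- m0)"
    using m mem_C_iff by auto
  show False
  proof (cases "(m1, m2) = (0, 0)")
    case False
    have "is_line (lin (- w2) w1 (w1 * u2 - w2 * u1))" "is_line (lin m1 m2 (- m0))"
      using is_line_lin[OF lw] is_line_lin[OF False] by simp_all
    with C_split is_conic show False unfolding is_conic_def by blast
  next
    case True
    have "m0 \<noteq> 0" using ex_F_nonzero m True by auto
    then have "C = lin (- w2) w1 (w1 * u2 - w2 * u1) \<union> lin (- w2) w1 (w1 * u2 - w2 * u1)"
      using C_split True unfolding lin_def by auto
    then show False using is_conic is_line_lin[OF lw] unfolding is_conic_def by blast
  qed
qed

lemma no_line_in_C:
  assumes "(w1, w2) \<noteq> (0, 0)"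
  shows "\<exists>s. (u1 + s * w1, u2 + s * w2) \<notin> C"
proof (rule ccontr)
  assume "\<not> ?thesis"
  then have "(u1 + s * w1, u2 + s * w2) \<in> C" for s by blast
  from no_three_points_on_line[OF assms this this this, of 0 1 2] show False by simp
qed

lemma no_three_collinear:
  assumes "P \<in> C" "Q \<in> C" "R \<in> C" "P \<noteq> Q" "P \<noteq> R" "Q \<noteq> R"
  shows "orient P Q R \<noteq> 0"
proof
  assume "orient P Q R = 0"
  then obtain s where R: "R = (fst P + s * (fst Q - fst P), snd P + s * (snd Q - snd P))"
    using assms(4) by (rule orient_eq_0_imp_on_line)
  have "s \<noteq> 0" "s \<noteq> 1" using R assms(5,6) by (auto simp: prod_eq_iff)
  moreover have "(fst Q - fst P, snd Q - snd P) \<noteq> (0, 0)" using assms(4) by (auto simp: prod_eq_iff)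
  moreover have "(fst P + 0 * (fst Q - fst P), snd P + 0 * (snd Q - snd P)) \<in> C"
    "(fst P + 1 * (fst Q - fst P), snd P + 1 * (snd Q - snd P)) \<in> C"
    "(fst P + s * (fst Q - fst P), snd P + s * (snd Q - snd P)) \<in> C"
    using assms(1-3) R by simp_all
  ultimately show False using no_three_points_on_line[of "fst Q - fst P" "snd Q - snd P" "fst P" 0 "snd P" 1 s]
    by fastforce
qed

text \<open>Five points on a conic determine it: \<open>H = G(R) F - F(R) G\<close>, with \<open>R \<notin> C\<close> on the line
  through two of the points, vanishes at three points of that line, so \<open>H\<close> is that line times an
  affine function, which then vanishes at the other three, non-collinear, points.\<close>
lemma quadratic_vanishing_at_five_points:
  assumes G: "quadratic G" and P: "set [P1, P2, P3, P4, P5] \<subseteq> C" "distinct [P1, P2, P3, P4, P5]"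
    and zeros: "\<And>P. P \<in> set [P1, P2, P3, P4, P5] \<Longrightarrow> G (fst P) (snd P) = 0"
  shows "\<exists>k. \<forall>x y. G x y = k * F x y"
proof -
  define w1 where "w1 = fst P2 - fst P1"
  define w2 where "w2 = snd P2 - snd P1"
  define R where "R = (fst P1 + 2 * w1, snd P1 + 2 * w2)"
  have "P1 \<noteq> P2" using P(2) by simp
  then have w: "(w1, w2) \<noteq> (0, 0)" unfolding w1_def w2_def by (auto simp: prod_eq_iff)
  have "R \<notin> C"
  proof
    assume "R \<in> C"
    moreover have "R \<noteq> P1" "R \<noteq> P2" using w unfolding R_def w1_def w2_def by (auto simp: prod_eq_iff)
    moreover have "orient P1 P2 R = 0" unfolding orient_def R_def w1_def w2_def by (simp add: algebra_simps)
    ultimately show False using no_three_collinear[of P1 P2 R] P by auto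
  qed
  then have FR: "F (fst R) (snd R) \<noteq> 0" using mem_C_iff[of "fst R" "snd R"] by simp
  define H where "H = (\<lambda>x y. G (fst R) (snd R) * F x y - F (fst R) (snd R) * G x y)"
  have H: "quadratic H"
    unfolding H_def by (rule quadratic_lincomb[OF quadratic_F G])
  have H_P: "H (fst P) (snd P) = 0" if "P \<in> set [P1, P2, P3, P4, P5]" for P
    using zeros[OF that] P(1) that mem_C_iff[of "fst P" "snd P"] unfolding H_def by auto
  have on_line: "H (fst P1 + s * w1) (snd P1 + s * w2) = 0" if "s \<in> {0, 1, 2}" for s
    using that H_P[of P1] H_P[of P2] unfolding H_def R_def w1_def w2_def by auto
  obtain m1 m2 m0 where m: "\<And>x y. H x y = (w1 * (y - snd P1) - w2 * (x - fst P1)) * (m1 * x + m2 * y + m0)"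
    using quadratic_vanishing_on_line_factors[OF H w on_line[of 0] on_line[of 1] on_line[of 2]] by auto
  have "m1 * fst P + m2 * snd P + m0 = 0" if "P \<in> {P3, P4, P5}" for P
  proof -
    have "orient P1 P2 P \<noteq> 0" using no_three_collinear[of P1 P2 P] that P by auto
    then have "w1 * (snd P - snd P1) - w2 * (fst P - fst P1) \<noteq> 0"
      unfolding orient_def w1_def w2_def by simp
    then show ?thesis using H_P[of P] m[of "fst P" "snd P"] that by auto
  qed
  moreover have "orient P3 P4 P5 \<noteq> 0" using no_three_collinear[of P3 P4 P5] P by auto
  ultimately have "m1 = 0 \<and> m2 = 0 \<and> m0 = 0" by (rule affine_vanishing_at_three_noncollinear)
  then have "G x y = G (fst R) (snd R) / F (fst R) (snd R) * F x y" for x y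
    using m[of x y] FR unfolding H_def by (simp add: field_simps)
  then show ?thesis by blast
qed

lemma card_quadratic_zeros_le_4:
  assumes "quadratic G" and "\<not> (\<exists>k. \<forall>x y. G x y = k * F x y)"
  shows "finite {P \<in> C. G (fst P) (snd P) = 0} \<and> card {P \<in> C. G (fst P) (snd P) = 0} \<le> 4"
proof (rule finite_card_le_if_distinct_lists)
  fix xs assume xs: "set xs \<subseteq> {P \<in> C. G (fst P) (snd P) = 0}" "distinct xs"
  show "length xs \<le> 4"
  proof (rule ccontr)
    assume "\<not> length xs \<le> 4"
    then obtain P1 P2 P3 P4 P5 ys where xs_eq: "xs = P1 # P2 # P3 # P4 # P5 # ys"
      by (simp add: eval_nat_numeral Suc_le_length_iff not_le flip: Suc_le_eq del: split_paired_Ex) blast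
    have "set [P1, P2, P3, P4, P5] \<subseteq> C" "distinct [P1, P2, P3, P4, P5]"
      "\<And>P. P \<in> set [P1, P2, P3, P4, P5] \<Longrightarrow> G (fst P) (snd P) = 0"
      using xs unfolding xs_eq by auto
    then have "\<exists>k. \<forall>x y. G x y = k * F x y" by (rule quadratic_vanishing_at_five_points[OF assms(1)])
    with assms(2) show False ..
  qed
qed

lemma card_line_inter_le_2:
  assumes "n \<noteq> 0"
  shows "finite {P \<in> C. n \<bullet> P = r} \<and> card {P \<in> C. n \<bullet> P = r} \<le> 2"
proof (rule finite_card_le_if_distinct_lists)
  fix xs assume xs: "set xs \<subseteq> {P \<in> C. n \<bullet> P = r}" "distinct xs"
  show "length xs \<le> 2"
  proof (rule ccontr)
    assume "\<not> length xs \<le> 2"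
    then obtain P Q R ys where xs_eq: "xs = P # Q # R # ys"
      by (simp add: eval_nat_numeral Suc_le_length_iff not_le flip: Suc_le_eq del: split_paired_Ex) blast
    have "orient P Q R = 0"
    proof (rule ccontr)
      assume "orient P Q R \<noteq> 0"
      with xs have "fst n = 0 \<and> snd n = 0 \<and> - r = 0"
        by (intro affine_vanishing_at_three_noncollinear) (auto simp: xs_eq inner_prod_def)
      then show False using assms by (simp add: prod_eq_iff)
    qed
    moreover have "P \<in> C" "Q \<in> C" "R \<in> C" "P \<noteq> Q" "P \<noteq> R" "Q \<noteq> R"
      using xs unfolding xs_eq by auto
    ultimately show False using no_three_collinear by blast
  qed
qed

text \<open>A degenerate equation defines a cone (the kernel is a point through which every chord extends
  to a line of zeros) or a cylinder (invariant under translation along the kernel direction);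
  either way \<open>C\<close> would contain a line.\<close>
lemma quad_det_nonzero:
  assumes C_eq: "\<And>x y. (x, y) \<in> C \<longleftrightarrow> quad a b c d e g x y = 0"
  shows "quad_det a b c d e g \<noteq> 0"
proof
  assume "quad_det a b c d e g = 0"
  then obtain z1 z2 z3 where z: "(z1, z2, z3) \<noteq> (0, 0, 0)" "2 * a * z1 + b * z2 + d * z3 = 0"
    "b * z1 + 2 * c * z2 + e * z3 = 0" "d * z1 + e * z2 + 2 * g * z3 = 0"
    by (rule quad_det_eq_0_imp_kernel)
  show False
  proof (cases "z3 = 0")
    case False
    define k1 where "k1 = z1 / z3"
    define k2 where "k2 = z2 / z3"
    have "2 * a * k1 + b * k2 + d = 0" "b * k1 + 2 * c * k2 + e = 0" "d * k1 + e * k2 + 2 * g = 0"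
      using z(2-4) False unfolding k1_def k2_def by (simp_all add: field_simps)
    note cone = quad_cone[OF this]
    obtain v where v: "v \<in> C" "v \<noteq> (k1, k2)"
      using infinite_C by (metis finite.emptyI finite_insert insert_iff subsetI finite_subset)
    then have "(fst v - k1, snd v - k2) \<noteq> (0, 0)" by (auto simp: prod_eq_iff)
    moreover have "(k1 + s * (fst v - k1), k2 + s * (snd v - k2)) \<in> C" for s
      using C_eq[of "fst v" "snd v"] v(1) cone[of s] C_eq by simp
    ultimately show False using no_line_in_C by blast
  next
    case True
    then have "(z1, z2) \<noteq> (0, 0)" and cylinder: "quad a b c d e g (v1 + s * z1) (v2 + s * z2) = quad a b c d e g v1 v2"
      for s v1 v2
      using z quad_cylinder[of a z1 b z2 c d e] by auto
    obtain v where "v \<in> C" using infinite_C by (metis finite.emptyI ex_in_conv)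
    then have "(fst v + s * z1, snd v + s * z2) \<in> C" for s
      using C_eq[of "fst v" "snd v"] C_eq cylinder by simp
    then show False using no_line_in_C[OF \<open>(z1, z2) \<noteq> (0, 0)\<close>] by blast
  qed
qed

lemma circle_if_sqdist_multiple:
  assumes "\<And>x y. (x - q1)\<^sup>2 + (y - q2)\<^sup>2 - \<rho> = \<kappa> * F x y"
  shows "\<exists>r. is_circle C (q1, q2) r"
proof -
  have "\<kappa> \<noteq> 0"
  proof
    assume "\<kappa> = 0"
    then have "(q1 - q1)\<^sup>2 + (q2 - q2)\<^sup>2 - \<rho> = 0" "(q1 + 1 - q1)\<^sup>2 + (q2 - q2)\<^sup>2 - \<rho> = 0"
      using assms[of q1 q2] assms[of "q1 + 1" q2] by simp_all
    then show False by simp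
  qed
  then have C_eq: "(x, y) \<in> C \<longleftrightarrow> sqrt ((x - q1)\<^sup>2 + (y - q2)\<^sup>2) = sqrt \<rho>" for x y
    using mem_C_iff[of x y] assms[of x y] by auto
  have dist_eq: "dist (x, y) (q1, q2) = sqrt ((x - q1)\<^sup>2 + (y - q2)\<^sup>2)" for x y
    by (simp add: dist_Pair_Pair dist_real_def)
  show ?thesis
  proof (cases "\<rho> > 0")
    case True
    have "C = {P. dist P (q1, q2) = sqrt \<rho>}"
      using C_eq dist_eq by auto
    then show ?thesis using True unfolding is_circle_def by (auto intro!: exI[of _ "sqrt \<rho>"])
  next
    case False
    have "C \<subseteq> {(q1, q2)}"
    proof
      fix P assume "P \<in> C"
      then have "sqrt ((fst P - q1)\<^sup>2 + (snd P - q2)\<^sup>2) = sqrt \<rho>" using C_eq[of "fst P" "snd P"] by simp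
      then have "(fst P - q1)\<^sup>2 + (snd P - q2)\<^sup>2 = 0"
        using False real_sqrt_le_0_iff[of \<rho>] by (metis linorder_not_less real_sqrt_eq_0_iff sum_power2_ge_zero
            order_antisym real_sqrt_ge_zero)
      then show "P \<in> {(q1, q2)}" by (simp add: sum_power2_eq_zero_iff prod_eq_iff)
    qed
    then show ?thesis using infinite_C finite_subset by blast
  qed
qed

text \<open>The power difference \<open>h(v) = |v - p|\<^sup>2 - |T v - q|\<^sup>2\<close> of an affine map \<open>T v = M v + t\<close>
  cannot be an equation of \<open>C\<close> invariant under \<open>T\<close> unless \<open>C\<close> is a circle about \<open>p\<close>: for
  \<open>k \<noteq> 0\<close> invariance forces \<open>M\<close> to be orthogonal, killing the quadratic part of \<open>h\<close>, and for
  \<open>k = 0\<close> the image of \<open>T\<close> lies in \<open>C\<close>, so \<open>M = 0\<close>.\<close>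
lemma circle_if_invariant_power_difference:
  assumes h: "\<And>x y. (x - p1)\<^sup>2 + (y - p2)\<^sup>2 - (m1 * x + m2 * y + t1 - q1)\<^sup>2
      - (m3 * x + m4 * y + t2 - q2)\<^sup>2 = c * F x y"
    and "c \<noteq> 0"
    and FT: "\<And>x y. F (m1 * x + m2 * y + t1) (m3 * x + m4 * y + t2) = k * F x y"
  shows "\<exists>r. is_circle C (p1, p2) r"
proof -
  define a where "a = 1 - m1\<^sup>2 - m3\<^sup>2"
  define b where "b = - 2 * (m1 * m2 + m3 * m4)"
  define c' where "c' = 1 - m2\<^sup>2 - m4\<^sup>2"
  define d where "d = - 2 * p1 - 2 * m1 * (t1 - q1) - 2 * m3 * (t2 - q2)"
  define e where "e = - 2 * p2 - 2 * m2 * (t1 - q1) - 2 * m4 * (t2 - q2)"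
  define g where "g = p1\<^sup>2 + p2\<^sup>2 - (t1 - q1)\<^sup>2 - (t2 - q2)\<^sup>2"
  note h_quad = power_difference_eq_quad[of _ p1 _ p2 m1 m2 t1 q1 m3 m4 t2 q2,
      folded a_def b_def c'_def d_def e_def g_def]
  have C_eq: "(x, y) \<in> C \<longleftrightarrow> quad a b c' d e g x y = 0" for x y
    using mem_C_iff h[of x y] h_quad[of x y] \<open>c \<noteq> 0\<close> by simp
  have D: "quad_det a b c' d e g \<noteq> 0" using quad_det_nonzero[OF C_eq] .
  have hT: "quad a b c' d e g (m1 * x + m2 * y + t1) (m3 * x + m4 * y + t2) = k * quad a b c' d e g x y" for x y
    using h FT h_quad by (metis mult.left_commute)
  note eigen = quad_affine_eigen[OF hT]
  have det: "(m1 * m4 - m2 * m3)\<^sup>2 = k ^ 3" using eigen(1) D by simp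
  show ?thesis
  proof (cases "k = 0")
    case False
    have "a = 0 \<and> b = 0 \<and> c' = 0"
      using isometry_defect_eigen_imp_orthogonal[of m1 m3 m2 m4 k] eigen(2) False det
      unfolding a_def b_def c'_def by blast
    then have "quad_det a b c' d e g = 0" unfolding quad_det_def by simp
    then show ?thesis using D by simp
  next
    case True
    then have image_in_C: "(m1 * x + m2 * y + t1, m3 * x + m4 * y + t2) \<in> C" for x y
      using hT C_eq by simp
    have "(m1, m3) = (0, 0)"
      using no_line_in_C[of m1 m3 t1 t2] image_in_C[of _ 0] by (auto simp: algebra_simps)
    moreover have "(m2, m4) = (0, 0)"
      using no_line_in_C[of m2 m4 t1 t2] image_in_C[of 0] by (auto simp: algebra_simps)
    ultimately have "(x - p1)\<^sup>2 + (y - p2)\<^sup>2 - ((t1 - q1)\<^sup>2 + (t2 - q2)\<^sup>2) = c * F x y" for x y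
      using h[of x y] by simp
    then show ?thesis by (rule circle_if_sqdist_multiple)
  qed
qed

lemma card_pairs_on_lines:
  assumes "n \<noteq> 0" "b \<noteq> 0"
    and "\<And>v v'. (v, v') \<in> S \<Longrightarrow> v \<in> C \<and> v' \<in> C \<and> n \<bullet> v = r \<and> b \<bullet> v' = \<phi> v"
  shows "finite S \<and> card S \<le> 4"
proof -
  have "S \<subseteq> Sigma {v \<in> C. n \<bullet> v = r} (\<lambda>v. {v' \<in> C. b \<bullet> v' = \<phi> v})"
    using assms(3) by auto
  then have "finite S \<and> card S \<le> 2 * 2"
    using card_line_inter_le_2[OF assms(1)] card_line_inter_le_2[OF assms(2)]
    by (intro finite_card_le_mult_if_subset_Sigma) auto
  then show ?thesis by simp
qed

end

section \<open>Pairs of points of a conic with prescribed equal distances\<close>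

locale equidistant_pairs = conic +
  fixes P1 P2 P3 Q1 Q2 Q3 :: pt
  assumes dist_12: "dist P1 P2 \<noteq> dist Q1 Q2" and dist_13: "dist P1 P3 \<noteq> dist Q1 Q3"
    and dist_23: "dist P2 P3 \<noteq> dist Q2 Q3"
    and no_circle_P1: "\<nexists>r. is_circle C P1 r" and no_circle_Q1: "\<nexists>r. is_circle C Q1 r"
begin

definition pairs :: "(pt \<times> pt) set" where
  "pairs = {(v, v'). v \<in> C \<and> v' \<in> C \<and> dist v P1 = dist v' Q1 \<and> dist v P2 = dist v' Q2
     \<and> dist v P3 = dist v' Q3}"

definition offset :: "pt \<Rightarrow> pt \<Rightarrow> real" where
  "offset P Q = ((norm P1)\<^sup>2 - (norm P)\<^sup>2 - (norm Q1)\<^sup>2 + (norm Q)\<^sup>2) / 2"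

lemma pairs_linear:
  assumes "(v, v') \<in> pairs"
  shows "(Q1 - Q2) \<bullet> v' = (P1 - P2) \<bullet> v - offset P2 Q2" "(Q1 - Q3) \<bullet> v' = (P1 - P3) \<bullet> v - offset P3 Q3"
  using assms dist_eq_imp_linear[of v P1 v' Q1] unfolding pairs_def offset_def by auto

lemma no_pair_if_proportional:
  assumes "(v, v') \<in> pairs" "P1 - P3 = l *\<^sub>R (P1 - P2)" "Q1 - Q3 = l *\<^sub>R (Q1 - Q2)"
  shows False
  using dist_eq_if_proportional_differences[OF _ _ _ assms(2,3)] assms(1) dist_12 dist_13 dist_23
  unfolding pairs_def by blast

lemma card_pairs_if_Q_equal:
  assumes "Q2 = Q1" "Q3 = Q1"
  shows "finite pairs \<and> card pairs \<le> 4"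
proof (cases "orient P1 P2 P3 = 0")
  case True
  have "P1 \<noteq> P2" using dist_12 assms by auto
  obtain s where "P3 = (fst P1 + s * (fst P2 - fst P1), snd P1 + s * (snd P2 - snd P1))"
    using True \<open>P1 \<noteq> P2\<close> by (rule orient_eq_0_imp_on_line)
  then have "P1 - P3 = s *\<^sub>R (P1 - P2)" "Q1 - Q3 = s *\<^sub>R (Q1 - Q2)"
    using assms by (simp_all add: prod_eq_iff algebra_simps)
  then have "pairs = {}" using no_pair_if_proportional[of _ _ s] by fastforce
  then show ?thesis by simp
next
  case False
  show ?thesis
  proof (cases "pairs = {}")
    case False
    then obtain v0 v0' where "(v0, v0') \<in> pairs" by auto
    have same_v: "v = v0" if "(v, v') \<in> pairs" for v v'
    proof -
      have "(P1 - P2) \<bullet> (v - v0) = 0" "(P1 - P3) \<bullet> (v - v0) = 0"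
        using pairs_linear[OF that] pairs_linear[OF \<open>(v0, v0') \<in> pairs\<close>] assms
        by (simp_all add: inner_diff_right)
      moreover have "fst (P1 - P2) * snd (P1 - P3) - snd (P1 - P2) * fst (P1 - P3) \<noteq> 0"
        using \<open>orient P1 P2 P3 \<noteq> 0\<close> unfolding orient_def by (simp add: algebra_simps)
      ultimately show "v = v0" using eq_0_if_orthogonal_to_independent by fastforce
    qed
    define \<rho> where "\<rho> = (dist v0 P1)\<^sup>2"
    let ?V' = "{v' \<in> C. (fst v' - fst Q1)\<^sup>2 + (snd v' - snd Q1)\<^sup>2 - \<rho> = 0}"
    have "pairs \<subseteq> Sigma {v0} (\<lambda>_. ?V')"
    proof
      fix p assume "p \<in> pairs"
      then obtain v v' where p: "p = (v, v')" "(v, v') \<in> pairs" by (cases p) auto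
      then have "v = v0" using same_v by blast
      with p show "p \<in> Sigma {v0} (\<lambda>_. ?V')" unfolding pairs_def \<rho>_def by (simp add: dist_sq_eq)
    qed
    moreover have "finite ?V' \<and> card ?V' \<le> 4"
    proof (rule card_quadratic_zeros_le_4)
      show "quadratic (\<lambda>x y. (x - fst Q1)\<^sup>2 + (y - snd Q1)\<^sup>2 - \<rho>)"
        by (rule quadratic_circle)
      show "\<nexists>k. \<forall>x y. (x - fst Q1)\<^sup>2 + (y - snd Q1)\<^sup>2 - \<rho> = k * F x y"
        using circle_if_sqdist_multiple no_circle_Q1 by fastforce
    qed
    ultimately show ?thesis
      using finite_card_le_mult_if_subset_Sigma[of pairs "{v0}" "\<lambda>_. ?V'" 1 4] by simp
  qed simp
qed

lemma card_pairs_if_Q_collinear: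
  assumes "orient Q1 Q2 Q3 = 0" "\<not> (Q2 = Q1 \<and> Q3 = Q1)"
  shows "finite pairs \<and> card pairs \<le> 4"
proof (cases "Q1 = Q2")
  case True
  then have "P1 - P2 \<noteq> 0" "Q1 - Q3 \<noteq> 0" using dist_12 assms(2) by auto
  then show ?thesis
  proof (rule card_pairs_on_lines)
    fix v v' assume pair: "(v, v') \<in> pairs"
    then have "v \<in> C" "v' \<in> C" unfolding pairs_def by simp_all
    with pairs_linear[OF pair] True
    show "v \<in> C \<and> v' \<in> C \<and> (P1 - P2) \<bullet> v = offset P2 Q2 \<and> (Q1 - Q3) \<bullet> v' = (P1 - P3) \<bullet> v - offset P3 Q3"
      by simp
  qed
next
  case False
  obtain s where "Q3 = (fst Q1 + s * (fst Q2 - fst Q1), snd Q1 + s * (snd Q2 - snd Q1))"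
    using assms(1) False by (rule orient_eq_0_imp_on_line)
  then have Q: "Q1 - Q3 = s *\<^sub>R (Q1 - Q2)" by (simp add: prod_eq_iff algebra_simps)
  show ?thesis
  proof (cases "(P1 - P3) - s *\<^sub>R (P1 - P2) = 0")
    case True
    then have "pairs = {}" using no_pair_if_proportional[OF _ _ Q] by fastforce
    then show ?thesis by simp
  next
    case n: False
    have "Q1 - Q2 \<noteq> 0" using False by simp
    with n show ?thesis
    proof (rule card_pairs_on_lines)
      fix v v' assume pair: "(v, v') \<in> pairs"
      have "((P1 - P3) - s *\<^sub>R (P1 - P2)) \<bullet> v = (Q1 - Q3) \<bullet> v' + offset P3 Q3 - s * ((Q1 - Q2) \<bullet> v' + offset P2 Q2)"
        using pairs_linear[OF pair] by (simp add: inner_diff_left)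
      also have "\<dots> = offset P3 Q3 - s * offset P2 Q2" unfolding Q by (simp add: algebra_simps)
      finally show "v \<in> C \<and> v' \<in> C \<and> ((P1 - P3) - s *\<^sub>R (P1 - P2)) \<bullet> v = offset P3 Q3 - s * offset P2 Q2
          \<and> (Q1 - Q2) \<bullet> v' = (P1 - P2) \<bullet> v - offset P2 Q2"
        using pairs_linear[OF pair] pair unfolding pairs_def by simp
    qed
  qed
qed

lemma pairs_affine_image:
  assumes "orient Q1 Q2 Q3 \<noteq> 0"
  obtains m1 m2 t1 m3 m4 t2 where
    "\<And>v v'. (v, v') \<in> pairs \<Longrightarrow> v' = (m1 * fst v + m2 * snd v + t1, m3 * fst v + m4 * snd v + t2)"
    "\<And>x y. (Q1 - Q2) \<bullet> (m1 * x + m2 * y + t1, m3 * x + m4 * y + t2) = (P1 - P2) \<bullet> (x, y) - offset P2 Q2"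
proof -
  have det: "fst (Q1 - Q2) * snd (Q1 - Q3) - snd (Q1 - Q2) * fst (Q1 - Q3) \<noteq> 0"
    using assms unfolding orient_def by (simp add: algebra_simps)
  obtain m1 m2 t1 m3 m4 t2 where solve: "\<And>x y x' y'.
      (fst (Q1 - Q2) * x' + snd (Q1 - Q2) * y' = fst (P1 - P2) * x + snd (P1 - P2) * y + - offset P2 Q2 \<and>
       fst (Q1 - Q3) * x' + snd (Q1 - Q3) * y' = fst (P1 - P3) * x + snd (P1 - P3) * y + - offset P3 Q3)
      \<longleftrightarrow> (x' = m1 * x + m2 * y + t1 \<and> y' = m3 * x + m4 * y + t2)"
    by (rule linear_system_solution[OF det, where ?\<alpha>1.0 = "fst (P1 - P2)" and ?\<alpha>2.0 = "snd (P1 - P2)"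
        and ?\<gamma>1.0 = "- offset P2 Q2" and ?\<beta>1.0 = "fst (P1 - P3)" and ?\<beta>2.0 = "snd (P1 - P3)"
        and ?\<gamma>2.0 = "- offset P3 Q3"]) blast
  have "v' = (m1 * fst v + m2 * snd v + t1, m3 * fst v + m4 * snd v + t2)" if "(v, v') \<in> pairs" for v v'
    using pairs_linear[OF that] solve[where x = "fst v" and y = "snd v" and x' = "fst v'" and y' = "snd v'"]
    by (simp add: inner_prod_def prod_eq_iff)
  moreover have "(Q1 - Q2) \<bullet> (m1 * x + m2 * y + t1, m3 * x + m4 * y + t2) = (P1 - P2) \<bullet> (x, y) - offset P2 Q2" for x y
    using solve[where x = x and y = y and x' = "m1 * x + m2 * y + t1" and y' = "m3 * x + m4 * y + t2"]
    by (simp add: inner_prod_def)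
  ultimately show ?thesis by (rule that)
qed

text \<open>If it were a multiple \<open>c F\<close>: for \<open>c = 0\<close> the map \<open>T\<close> would send every \<open>v\<close> to a point
  with \<open>|v - P2| = |T v - Q2|\<close>, in particular \<open>P2\<close> to \<open>Q2\<close>, against \<open>|P1 P2| \<noteq> |Q1 Q2|\<close>.\<close>
lemma power_difference_not_multiple:
  assumes T_linear: "\<And>x y. (Q1 - Q2) \<bullet> (m1 * x + m2 * y + t1, m3 * x + m4 * y + t2) = (P1 - P2) \<bullet> (x, y) - offset P2 Q2"
    and FT: "\<And>x y. F (m1 * x + m2 * y + t1) (m3 * x + m4 * y + t2) = k * F x y"
  shows "\<nexists>c. \<forall>x y. (x - fst P1)\<^sup>2 + (y - snd P1)\<^sup>2 - (m1 * x + m2 * y + t1 - fst Q1)\<^sup>2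
      - (m3 * x + m4 * y + t2 - snd Q1)\<^sup>2 = c * F x y"
proof
  assume "\<exists>c. \<forall>x y. (x - fst P1)\<^sup>2 + (y - snd P1)\<^sup>2 - (m1 * x + m2 * y + t1 - fst Q1)\<^sup>2
      - (m3 * x + m4 * y + t2 - snd Q1)\<^sup>2 = c * F x y"
  then obtain c where hc: "\<And>x y. (x - fst P1)\<^sup>2 + (y - snd P1)\<^sup>2 - (m1 * x + m2 * y + t1 - fst Q1)\<^sup>2
      - (m3 * x + m4 * y + t2 - snd Q1)\<^sup>2 = c * F x y" by blast
  define T where "T v = (m1 * fst v + m2 * snd v + t1, m3 * fst v + m4 * snd v + t2)" for v
  show False
  proof (cases "c = 0")
    case True
    then have "(dist v P1)\<^sup>2 = (dist (T v) Q1)\<^sup>2" for v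
      using hc[of "fst v" "snd v"] unfolding T_def dist_sq_eq by simp
    moreover have "(norm P1)\<^sup>2 - (norm P2)\<^sup>2 - 2 * ((P1 - P2) \<bullet> v)
        = (norm Q1)\<^sup>2 - (norm Q2)\<^sup>2 - 2 * ((Q1 - Q2) \<bullet> T v)" for v
      using T_linear[of "fst v" "snd v"] unfolding offset_def T_def by (simp add: field_simps)
    ultimately have "(dist v P2)\<^sup>2 = (dist (T v) Q2)\<^sup>2" for v
      using dist_sq_diff[of v P1 P2] dist_sq_diff[of "T v" Q1 Q2] by (metis diff_left_imp_eq)
    from this[of P2] have "T P2 = Q2" by simp
    then have "dist P2 P1 = dist Q2 Q1"
      using \<open>(dist P2 P1)\<^sup>2 = (dist (T P2) Q1)\<^sup>2\<close> by (simp add: power2_eq_iff_nonneg)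
    then show False using dist_12 by (simp add: dist_commute)
  next
    case False
    have "\<exists>r. is_circle C (fst P1, snd P1) r"
      using circle_if_invariant_power_difference[OF hc False FT] .
    then show False using no_circle_P1 by simp
  qed
qed

text \<open>Then \<open>v' = T v\<close> for an affine map \<open>T\<close>, and \<open>v\<close> lies on \<open>C\<close> and on the two conics
  \<open>F \<circ> T = 0\<close> and \<open>|v - P1|\<^sup>2 = |T v - Q1|\<^sup>2\<close>, at least one of which meets \<open>C\<close> properly.\<close>
lemma card_pairs_if_Q_noncollinear:
  assumes "orient Q1 Q2 Q3 \<noteq> 0"
  shows "finite pairs \<and> card pairs \<le> 4"
proof -
  obtain m1 m2 t1 m3 m4 t2 where
    T_pairs: "\<And>v v'. (v, v') \<in> pairs \<Longrightarrow> v' = (m1 * fst v + m2 * snd v + t1, m3 * fst v + m4 * snd v + t2)"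
    and T_linear: "\<And>x y. (Q1 - Q2) \<bullet> (m1 * x + m2 * y + t1, m3 * x + m4 * y + t2) = (P1 - P2) \<bullet> (x, y) - offset P2 Q2"
    by (rule pairs_affine_image[OF assms]) blast
  define FT where "FT x y = F (m1 * x + m2 * y + t1) (m3 * x + m4 * y + t2)" for x y
  define h where "h x y = (x - fst P1)\<^sup>2 + (y - snd P1)\<^sup>2 - (m1 * x + m2 * y + t1 - fst Q1)\<^sup>2
      - (m3 * x + m4 * y + t2 - snd Q1)\<^sup>2" for x y
  have "FT (fst v) (snd v) = 0 \<and> h (fst v) (snd v) = 0" if "(v, v') \<in> pairs" for v v'
  proof -
    have "v' \<in> C" "(dist v P1)\<^sup>2 = (dist v' Q1)\<^sup>2" using that unfolding pairs_def by simp_all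
    then show ?thesis
      using T_pairs[OF that] mem_C_iff[of "fst v'" "snd v'"] unfolding FT_def h_def dist_sq_eq by simp
  qed
  moreover have "quadratic FT" "quadratic h"
    unfolding FT_def h_def by (rule quadratic_affine_comp[OF quadratic_F] quadratic_power_difference)+
  moreover have "(\<nexists>k. \<forall>x y. FT x y = k * F x y) \<or> (\<nexists>c. \<forall>x y. h x y = c * F x y)"
    using power_difference_not_multiple[OF T_linear] unfolding FT_def h_def by blast
  ultimately obtain G where G: "quadratic G" "\<nexists>k. \<forall>x y. G x y = k * F x y"
    and G_pairs: "\<And>v v'. (v, v') \<in> pairs \<Longrightarrow> G (fst v) (snd v) = 0"
    by blast
  have "pairs \<subseteq> Sigma {v \<in> C. G (fst v) (snd v) = 0}
      (\<lambda>v. {(m1 * fst v + m2 * snd v + t1, m3 * fst v + m4 * snd v + t2)})"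
    using G_pairs T_pairs unfolding pairs_def by auto
  then have "finite pairs \<and> card pairs \<le> 4 * 1"
    using card_quadratic_zeros_le_4[OF G] by (intro finite_card_le_mult_if_subset_Sigma) auto
  then show ?thesis by simp
qed

lemma card_pairs_le_4: "finite pairs \<and> card pairs \<le> 4"
  using card_pairs_if_Q_noncollinear card_pairs_if_Q_collinear card_pairs_if_Q_equal by blast

end

theorem lemma4p3:
  fixes d m n :: nat and f1 f2 :: "real poly poly" and C1 C2 :: "pt set"
    and p q :: "nat \<Rightarrow> pt" and i j k l u w :: nat
  assumes "d \<ge> 1"
    and "irreducible_curve C1" and "irreducible_curve C2"
    and "curve_degree C1 \<le> d" and "curve_degree C2 \<le> d"
    and "f1 \<noteq> 0" "zset f1 = C1" "tdeg f1 = curve_degree C1"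
    and "f2 \<noteq> 0" "zset f2 = C2" "tdeg f2 = curve_degree C2"
    and "inj_on p {1..m}" "p ` {1..m} \<subseteq> C1"
    and "inj_on q {1..n}" "q ` {1..n} \<subseteq> C2"
    and "\<not> vertical_line C1" "\<not> vertical_line C2"
    and "p ` {1..m} \<inter> q ` {1..n} = {}"
    and "circle_cond C1 (q ` {1..n})" "circle_cond C2 (p ` {1..m})"
    and "line_cond C1 (q ` {1..n})" "line_cond C2 (p ` {1..m})"
    and "i \<in> {1..m}" "j \<in> {1..m}" "k \<in> {1..m}" "l \<in> {1..m}" "u \<in> {1..m}" "w \<in> {1..m}"
    and "dist (p i) (p k) \<noteq> dist (p j) (p l)"
    and "dist (p i) (p u) \<noteq> dist (p j) (p w)"
    and "dist (p k) (p u) \<noteq> dist (p l) (p w)"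
    and "is_conic C2"
  shows "finite (Cset f2 p i j \<inter> Cset f2 p k l \<inter> Cset f2 p u w) \<and>
         card (Cset f2 p i j \<inter> Cset f2 p k l \<inter> Cset f2 p u w) \<le> 4"
proof -
  txt \<open>Only the conic \<open>C2\<close>, the distance hypotheses and condition (3) for \<open>C2\<close> are needed.\<close>
  have no_circle: "\<nexists>r. is_circle C2 (p s) r" if "s \<in> {1..m}" for s
    using assms(20) that unfolding circle_cond_def by blast
  interpret equidistant_pairs f2 C2 "p i" "p k" "p u" "p j" "p l" "p w"
    using assms(9-11,29-32) no_circle[OF assms(23)] no_circle[OF assms(24)]
    by unfold_locales auto
  have dist_eq: "dist (x, y) P = dist (x', y') Q \<longleftrightarrow>
      (x - fst P)\<^sup>2 + (y - snd P)\<^sup>2 = (x' - fst Q)\<^sup>2 + (y' - snd Q)\<^sup>2" for x y x' y' and P Q :: pt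
    using dist_sq_eq[of "(x, y)" P] dist_sq_eq[of "(x', y')" Q]
      power2_eq_iff_nonneg[of "dist (x, y) P" "dist (x', y') Q"] by simp
  let ?flatten = "\<lambda>((x, y), x', y'). (x, y, x', y')"
  have "Cset f2 p i j \<inter> Cset f2 p k l \<inter> Cset f2 p u w = ?flatten ` pairs"
    by (auto simp: Cset_def pairs_def dist_eq mem_C_iff image_iff)
  moreover have "card (?flatten ` pairs) \<le> card pairs"
    using card_pairs_le_4 by (intro card_image_le) simp
  ultimately show ?thesis using card_pairs_le_4 by simp
qed

end
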